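(* The forms $\varphi_{nq,\ell}$ and $\varphi_{nq,[\lambda]}$ are closed: $d\varphi_{nq,\ell}(\mathbf x)=0$ for all $\mathbf x\in V^n$ (and likewise for $\varphi_{nq,[\lambda]}$). In particular $\varphi_{nq,[\lambda]}(\mathbf x)$ defines a de Rham cohomology class $[\varphi_{nq,[\lambda]}(\mathbf x)]\in H^{nq}(D,\mathrm{Hom}_{\mathbb C}(S_\lambda(\mathbb C^n),S_{[\lambda]}(V)))$.
   Context: $V$ real quadratic space of dimension $m=p+q$, signature $(p,q)$, orthogonal basis $e_\alpha$ ($(e_\alpha,e_\alpha)=1$, $1\le\alpha\le p$), $e_\mu$ ($(e_\mu,e_\mu)=-1$, $p<\mu\le p+q$); $D$ the space of negative definite $q$-planes in $V$, $D=G/K$ with $G=SO_0(V)$ and $K$ the stabilizer of $z_0=\mathrm{span}(e_\mu)$; $\mathfrak p\cong T_{z_0}D$ (complexified) has basis $X_{\alpha\mu}$ ($X_{\alpha\mu}e_\alpha=e_\mu$, $X_{\alpha\mu}e_\mu=e_\alpha$, other basis vectors $\mapsto0$), dual basis $\omega_{\alpha\mu}$. $1\le n\le p$; $x_{ki}$ is the $k$-th coordinate of $x_i$ for $\mathbf x=(x_1,\dots,x_n)\in V^n$. $\varphi_{nq,0}=2^{-nq/2}\prod_{i=1}^n\prod_\mu[\sum_\alpha(x_{\alpha i}-\tfrac1{2\pi}\tfrac\partial{\partial x_{\alpha i}})\otimes A(\omega_{\alpha\mu})](e^{-\pi\sum_{i,k}x_{ki}^2}\otimes1)$, $A$ = left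 exterior multiplication. $T(V)$ tensor algebra of $V\otimes\mathbb C$; $\mathcal D_i=\tfrac12\sum_\alpha(x_{\alpha i}-\tfrac1{2\pi}\tfrac\partial{\partial x_{\alpha i}})\otimes1\otimes A(e_\alpha)$ ($A(e_\alpha)$ left tensor multiplication); $\varphi_{nq,\ell}(\epsilon_{i_1}\otimes\cdots\otimes\epsilon_{i_\ell})=\mathcal D_{i_1}\cdots\mathcal D_{i_\ell}(\varphi_{nq,0}\otimes1)\in\mathcal S(V^n)\otimes\bigwedge^{nq}\mathfrak p^*\otimes T^\ell(V)$. For a partition $\lambda$ of $\ell$ with at most $n$ parts, $\varphi_{nq,[\lambda]}(w)=(1\otimes1\otimes\pi_{[\lambda]})\varphi_{nq,\ell}(\iota_\lambda w)$, $w\in S_\lambda(\mathbb C^n)$, where $S_\lambda$ is the Schur functor (Young symmetrizer of the row-by-row filling, projection $\pi_\lambda$, inclusion $\iota_\lambda$) and $\pi_{[\lambda]}=\mathcal H\pi_\lambda$ with $\mathcal H$ the orthogonal projection onto harmonic tensors (kernel of all contractions by $(\,,\,)$), $S_{[\lambda]}(V)=\mathcal HS_\lambda(V)$. $K$-invariant elements of $\mathcal S(V^n)\otimes\bigwedge^j\mathfrak p^*\otimes T(V)$ correspond (by evaluation at $z_0$) to $G$-invariant elements of $\mathcal S(V^n)\otimes\mathcal A^j(D)\otimes T(V)$; under this identification the exterior derivative on $D$ is $d=d_{\mathcal S}+d_V$, $d_{\mathcal S}=\sum_{\alpha,\mu}\omega(X_{\alpha\mu})\otimes A(\omega_{\alpha\mu})\otimes1$,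 $d_V=\sum_{\alpha,\mu}1\otimes A(\omega_{\alpha\mu})\otimes\rho(X_{\alpha\mu})$, with $\omega$ the (infinitesimal) Weil representation action of $\mathfrak o(V)$ on $\mathcal S(V^n)$ and $\rho$ the derivation action on $T(V)$. *)

theory Defs
  imports "HOL-Analysis.Analysis" "HOL-Combinatorics.Permutations"
begin

text \<open>Conventions (0-based): coordinates of V are k < p+q; k < p are the positive
  directions e_alpha, p \<le> k < p+q the negative directions e_mu.
  A point of V^n is x :: nat \<times> nat \<Rightarrow> real, x (k,i) = k-th coordinate of x_i (i < n).
  The exterior algebra of p* is modelled by coefficient functions on finite sets S of
  index pairs (alpha,mu) (basis omega_S = wedge of the omega_(alpha,mu), (alpha,mu)\<in>S, in
  increasing lexicographic order); the tensor algebra T(V) by coefficient functions on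
  words w (basis e_(w!0) \<otimes> ... \<otimes> e_(w!(l-1))).  An element of
  S(V^n) \<otimes> Wedge p* \<otimes> T(V) is thus a function x \<Rightarrow> S \<Rightarrow> w \<Rightarrow> complex.\<close>

type_synonym coords = "nat \<times> nat \<Rightarrow> real"
type_synonym form = "coords \<Rightarrow> (nat \<times> nat) set \<Rightarrow> nat list \<Rightarrow> complex"

definition pderiv :: "nat \<Rightarrow> nat \<Rightarrow> (coords \<Rightarrow> complex) \<Rightarrow> coords \<Rightarrow> complex" where
  "pderiv k i f x = vector_derivative (\<lambda>t. f (x((k,i) := x (k,i) + t))) (at 0)"

definition gauss :: "nat \<Rightarrow> nat \<Rightarrow> coords \<Rightarrow> complex" where
  "gauss m n x = complex_of_real (exp (- pi * (\<Sum>k<m. \<Sum>i<n. (x (k,i))\<^sup>2)))"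

definition Hop :: "nat \<Rightarrow> nat \<Rightarrow> form \<Rightarrow> form" where
  "Hop k i \<Phi> = (\<lambda>x S w. complex_of_real (x (k,i)) * \<Phi> x S w
       - complex_of_real (1 / (2 * pi)) * pderiv k i (\<lambda>y. \<Phi> y S w) x)"

definition pair_less :: "nat \<times> nat \<Rightarrow> nat \<times> nat \<Rightarrow> bool" where
  "pair_less a b \<longleftrightarrow> fst a < fst b \<or> (fst a = fst b \<and> snd a < snd b)"

text \<open>left exterior multiplication A(omega_b)\<close>
definition extA :: "nat \<times> nat \<Rightarrow> form \<Rightarrow> form" where
  "extA b \<Phi> = (\<lambda>x S w. if b \<in> S
       then (-1) ^ card {c \<in> S. pair_less c b} * \<Phi> x (S - {b}) w else 0)"

text \<open>left tensor multiplication A(e_a)\<close>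
definition tensA :: "nat \<Rightarrow> form \<Rightarrow> form" where
  "tensA a \<Phi> = (\<lambda>x S w. case w of [] \<Rightarrow> 0 | c # w' \<Rightarrow> if c = a then \<Phi> x S w' else 0)"

text \<open>derivation action rho(X_{alpha mu}) on T(V), X e_alpha = e_mu, X e_mu = e_alpha\<close>
definition rhoX :: "nat \<Rightarrow> nat \<Rightarrow> form \<Rightarrow> form" where
  "rhoX a m \<Phi> = (\<lambda>x S w. \<Sum>j<length w.
       (if w ! j = m then \<Phi> x S (w[j := a])
        else if w ! j = a then \<Phi> x S (w[j := m]) else 0))"

text \<open>Weil representation (natural action f(g^{-1}x)) of X_{alpha mu} on S(V^n)\<close>
definition weilX :: "nat \<Rightarrow> nat \<Rightarrow> nat \<Rightarrow> form \<Rightarrow> form" where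
  "weilX n a m \<Phi> = (\<lambda>x S w. - (\<Sum>i<n.
       complex_of_real (x (m,i)) * pderiv a i (\<lambda>y. \<Phi> y S w) x
     + complex_of_real (x (a,i)) * pderiv m i (\<lambda>y. \<Phi> y S w) x))"

definition dS :: "nat \<Rightarrow> nat \<Rightarrow> nat \<Rightarrow> form \<Rightarrow> form" where
  "dS p q n \<Phi> = (\<lambda>x S w. \<Sum>a<p. \<Sum>m\<in>{p..<p+q}. extA (a,m) (weilX n a m \<Phi>) x S w)"

definition dV :: "nat \<Rightarrow> nat \<Rightarrow> form \<Rightarrow> form" where
  "dV p q \<Phi> = (\<lambda>x S w. \<Sum>a<p. \<Sum>m\<in>{p..<p+q}. extA (a,m) (rhoX a m \<Phi>) x S w)"

text \<open>exterior derivative d = d_S + d_V on (K-invariant) forms\<close>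
definition dD :: "nat \<Rightarrow> nat \<Rightarrow> nat \<Rightarrow> form \<Rightarrow> form" where
  "dD p q n \<Phi> = (\<lambda>x S w. dS p q n \<Phi> x S w + dV p q \<Phi> x S w)"

definition phi0_factor :: "nat \<Rightarrow> nat \<Rightarrow> nat \<Rightarrow> form \<Rightarrow> form" where
  "phi0_factor p i m \<Phi> = (\<lambda>x S w. \<Sum>a<p. extA (a,m) (Hop a i \<Phi>) x S w)"

text \<open>phi_{nq,0} in S(V^n) \<otimes> Wedge^{nq} p*; the product over i (outer) and mu (inner)
  is taken with the first factor outermost\<close>
definition phi_nq_0 :: "nat \<Rightarrow> nat \<Rightarrow> nat \<Rightarrow> coords \<Rightarrow> (nat \<times> nat) set \<Rightarrow> complex" where
  "phi_nq_0 p q n = (\<lambda>x S. complex_of_real (2 powr (- real (n * q) / 2)) *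
     foldr (\<lambda>(i,m) \<Psi>. phi0_factor p i m \<Psi>) [(i,m). i \<leftarrow> [0..<n], m \<leftarrow> [p..<p+q]]
       (\<lambda>y S' w'. if S' = {} \<and> w' = [] then gauss (p+q) n y else 0) x S [])"

definition lift0 :: "(coords \<Rightarrow> (nat \<times> nat) set \<Rightarrow> complex) \<Rightarrow> form" where
  "lift0 \<phi> = (\<lambda>x S w. if w = [] then \<phi> x S else 0)"

definition Dop :: "nat \<Rightarrow> nat \<Rightarrow> form \<Rightarrow> form" where
  "Dop p i \<Phi> = (\<lambda>x S w. (1/2) * (\<Sum>a<p. tensA a (Hop a i \<Phi>) x S w))"

definition phi_nq_basis :: "nat \<Rightarrow> nat \<Rightarrow> nat \<Rightarrow> nat list \<Rightarrow> form" where
  "phi_nq_basis p q n is = foldr (Dop p) is (lift0 (phi_nq_0 p q n))"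

definition idx :: "nat \<Rightarrow> nat \<Rightarrow> nat list set" where
  "idx d l = {w. set w \<subseteq> {..<d} \<and> length w = l}"

text \<open>T^l(C^d) as coefficient functions supported on words of length l over {..<d}\<close>
definition tensors :: "nat \<Rightarrow> nat \<Rightarrow> (nat list \<Rightarrow> complex) set" where
  "tensors d l = {t. \<forall>w. t w \<noteq> 0 \<longrightarrow> w \<in> idx d l}"

definition phi_nq_l :: "nat \<Rightarrow> nat \<Rightarrow> nat \<Rightarrow> nat \<Rightarrow> (nat list \<Rightarrow> complex) \<Rightarrow> form" where
  "phi_nq_l p q n l u = (\<lambda>x S w. \<Sum>is\<in>idx n l. u is * phi_nq_basis p q n is x S w)"

definition is_partition :: "nat list \<Rightarrow> bool" where
  "is_partition lam \<longleftrightarrow> sorted_wrt (\<ge>) lam \<and> (\<forall>r\<in>set lam. 0 < r)"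

text \<open>row-by-row filling: position j (0-based) lies in row yrow, column ycol\<close>
definition yrow :: "nat list \<Rightarrow> nat \<Rightarrow> nat" where
  "yrow lam j = (LEAST r. j < sum_list (take (Suc r) lam))"

definition ycol :: "nat list \<Rightarrow> nat \<Rightarrow> nat" where
  "ycol lam j = j - sum_list (take (yrow lam j) lam)"

definition row_group :: "nat list \<Rightarrow> (nat \<Rightarrow> nat) set" where
  "row_group lam = {s. s permutes {..<sum_list lam} \<and>
      (\<forall>j<sum_list lam. yrow lam (s j) = yrow lam j)}"

definition col_group :: "nat list \<Rightarrow> (nat \<Rightarrow> nat) set" where
  "col_group lam = {s. s permutes {..<sum_list lam} \<and>
      (\<forall>j<sum_list lam. ycol lam (s j) = ycol lam j)}"

text \<open>place permutation action (left action): s(v_1 \<otimes> ... \<otimes> v_l) = v_{s^{-1}1} \<otimes> ...\<close>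
definition permT :: "(nat \<Rightarrow> nat) \<Rightarrow> (nat list \<Rightarrow> complex) \<Rightarrow> (nat list \<Rightarrow> complex)" where
  "permT s t = (\<lambda>w. t (map (\<lambda>j. w ! s j) [0..<length w]))"

definition young_sym :: "nat list \<Rightarrow> (nat list \<Rightarrow> complex) \<Rightarrow> (nat list \<Rightarrow> complex)" where
  "young_sym lam t = (\<lambda>w. \<Sum>s\<in>row_group lam. \<Sum>r\<in>col_group lam.
      of_int (sign r) * permT (s \<circ> r) t w)"

definition hook_prod :: "nat list \<Rightarrow> nat" where
  "hook_prod lam = (\<Prod>r<length lam. \<Prod>c<lam ! r.
      (lam ! r - c) + card {r'. r < r' \<and> r' < length lam \<and> c < lam ! r'})"

text \<open>the idempotent projection pi_lam = c_lam / (product of hook lengths)\<close>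
definition young_proj :: "nat list \<Rightarrow> (nat list \<Rightarrow> complex) \<Rightarrow> (nat list \<Rightarrow> complex)" where
  "young_proj lam t = (\<lambda>w. complex_of_real (1 / real (hook_prod lam)) * young_sym lam t w)"

definition schur :: "nat list \<Rightarrow> nat \<Rightarrow> (nat list \<Rightarrow> complex) set" where
  "schur lam d = young_proj lam ` tensors d (sum_list lam)"

definition eta :: "nat \<Rightarrow> nat \<Rightarrow> complex" where
  "eta p k = (if k < p then 1 else -1)"

definition ins2 :: "nat \<Rightarrow> nat \<Rightarrow> nat \<Rightarrow> nat list \<Rightarrow> nat list" where
  "ins2 a b k w' = map (\<lambda>j. if j = a \<or> j = b then k
       else w' ! (if j < a then j else if j < b then j - 1 else j - 2)) [0..<length w' + 2]"

definition contr :: "nat \<Rightarrow> nat \<Rightarrow> nat \<Rightarrow> nat \<Rightarrow> (nat list \<Rightarrow> complex) \<Rightarrow> (nat list \<Rightarrow> complex)" where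
  "contr p q a b t = (\<lambda>w'. \<Sum>k<p+q. eta p k * t (ins2 a b k w'))"

definition harmonic :: "nat \<Rightarrow> nat \<Rightarrow> nat \<Rightarrow> (nat list \<Rightarrow> complex) set" where
  "harmonic p q l = {t \<in> tensors (p+q) l. \<forall>a b. a < b \<and> b < l \<longrightarrow> (\<forall>w'. contr p q a b t w' = 0)}"

definition herm :: "nat \<Rightarrow> nat \<Rightarrow> (nat list \<Rightarrow> complex) \<Rightarrow> (nat list \<Rightarrow> complex) \<Rightarrow> complex" where
  "herm d l s t = (\<Sum>w\<in>idx d l. s w * cnj (t w))"

definition harm_proj :: "nat \<Rightarrow> nat \<Rightarrow> nat \<Rightarrow> (nat list \<Rightarrow> complex) \<Rightarrow> (nat list \<Rightarrow> complex)" where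
  "harm_proj p q l t = (THE h. h \<in> harmonic p q l \<and>
      (\<forall>u\<in>harmonic p q l. herm (p+q) l (\<lambda>w. t w - h w) u = 0))"

definition phi_nq_lam :: "nat \<Rightarrow> nat \<Rightarrow> nat \<Rightarrow> nat list \<Rightarrow> (nat list \<Rightarrow> complex) \<Rightarrow> form" where
  "phi_nq_lam p q n lam u = (\<lambda>x S.
      harm_proj p q (sum_list lam)
        (young_proj lam (phi_nq_l p q n (sum_list lam) u x S)))"

end

theory Submission
  imports Defs
begin

(* The Schwartz parts of all forms involved are polynomials in the positive coordinates
   x_{alpha i} times the Gaussian.  On such functions the derivative in a negative direction
   x_{mu i} is multiplication by -2 pi x_{mu i}, so the Weil action of X_{alpha mu} becomes
   sum_i 2 pi x_{mu i} times the creation operator x_{alpha i} - (1/2pi) d/dx_{alpha i}, and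
   d_S phi = sum_{mu,i} 2 pi x_{mu i} F_{i mu} phi, where F_{i mu} is the (i,mu)-th factor of
   phi_{nq,0}.  Hence a form is closed as soon as it is annihilated by every F_{i mu} and by every
   part sum_alpha A(omega_{alpha mu}) rho(X_{alpha mu}) of d_V.
   phi_{nq,0} is annihilated: the creation operators commute, so the factors F_{i mu}
   anticommute and square to zero, and rho is trivial in tensor degree 0.  The operators D_i
   preserve this, since they commute with the F_{i mu} and the commutator of the mu-th part
   of d_V with D_i is (1/2) A(e_mu) F_{i mu}.  Finally H pi_lambda is linear and commutes with
   rho(X_{alpha mu}): the Young symmetrizer because rho commutes with place permutations, the
   harmonic projection because the harmonic tensors are o(V)-invariant and rho(X_{alpha mu}) is
   self-adjoint for the standard Hermitian product. *)

section \<open>Gaussian polynomials\<close>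

context
  fixes m n :: nat
begin

inductive gauss_poly :: "(nat \<times> nat) set \<Rightarrow> (coords \<Rightarrow> complex) \<Rightarrow> bool"
  for P :: "(nat \<times> nat) set" where
  gauss_poly_gauss: "gauss_poly P (gauss m n)"
| gauss_poly_add: "gauss_poly P f \<Longrightarrow> gauss_poly P g \<Longrightarrow> gauss_poly P (\<lambda>x. f x + g x)"
| gauss_poly_scale: "gauss_poly P f \<Longrightarrow> gauss_poly P (\<lambda>x. c * f x)"
| gauss_poly_coord: "d \<in> P \<Longrightarrow> gauss_poly P f \<Longrightarrow> gauss_poly P (\<lambda>x. complex_of_real (x d) * f x)"

lemma gauss_poly_zero: "gauss_poly P (\<lambda>x. 0)"
  using gauss_poly_scale[OF gauss_poly_gauss, of P 0] by simp

lemma gauss_poly_diff: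
  "gauss_poly P f \<Longrightarrow> gauss_poly P g \<Longrightarrow> gauss_poly P (\<lambda>x. f x - g x)"
  using gauss_poly_add[of P f "\<lambda>x. (-1) * g x"] gauss_poly_scale[of P g "-1"] by simp

lemma gauss_poly_sum:
  "(\<And>k. k \<in> K \<Longrightarrow> gauss_poly P (f k)) \<Longrightarrow> gauss_poly P (\<lambda>x. \<Sum>k\<in>K. f k x)"
  by (induction K rule: infinite_finite_induct) (auto intro: gauss_poly_zero gauss_poly_add)

lemma gauss_poly_if:
  "gauss_poly P f \<Longrightarrow> gauss_poly P g \<Longrightarrow> gauss_poly P (\<lambda>x. if b then f x else g x)"
  by (cases b) simp_all

lemma gauss_poly_mono: "gauss_poly P f \<Longrightarrow> P \<subseteq> Q \<Longrightarrow> gauss_poly Q f"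
  by (induction rule: gauss_poly.induct) (auto intro: gauss_poly.intros)

lemma has_pderiv_gauss:
  "((\<lambda>t. gauss m n (x(c := x c + t))) has_vector_derivative
     (if fst c < m \<and> snd c < n then complex_of_real (- 2 * pi) * (complex_of_real (x c) * gauss m n x)
      else 0)) (at 0)"
proof -
  define D where "D = (if fst c < m \<and> snd c < n then 2 * x c else 0)"
  define s where "s t = (\<Sum>k<m. \<Sum>i<n. ((x(c := x c + t)) (k, i))\<^sup>2)" for t
  have square_term: "((\<lambda>t. ((x(c := x c + t)) d)\<^sup>2) has_real_derivative (if d = c then 2 * x c else 0)) (at 0)"
    for d by (cases "d = c") (auto intro!: derivative_eq_intros)
  have "(s has_real_derivative (\<Sum>k<m. \<Sum>i<n. if (k, i) = c then 2 * x c else 0)) (at 0)"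
    unfolding s_def by (intro DERIV_sum square_term)
  also have "(\<Sum>k<m. \<Sum>i<n. if (k, i) = c then 2 * x c else 0)
      = (\<Sum>d\<in>{..<m} \<times> {..<n}. if d = c then 2 * x c else 0)"
    by (simp add: sum.cartesian_product case_prod_unfold)
  also have "\<dots> = D"
    by (simp add: D_def mem_Times_iff)
  finally have "(s has_real_derivative D) (at 0)" .
  from DERIV_chain2[OF DERIV_exp DERIV_cmult[OF this, of "- pi"]]
  have "((\<lambda>t. exp (- pi * s t)) has_real_derivative exp (- pi * s 0) * (- pi * D)) (at 0)" .
  from has_vector_derivative_of_real[OF this]
  have "((\<lambda>t. complex_of_real (exp (- pi * s t))) has_vector_derivative
      complex_of_real (exp (- pi * s 0) * (- pi * D))) (at 0)" .
  moreover have "(\<lambda>t. complex_of_real (exp (- pi * s t))) = (\<lambda>t. gauss m n (x(c := x c + t)))"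
    by (simp add: s_def gauss_def)
  moreover have "complex_of_real (exp (- pi * s 0) * (- pi * D)) =
      (if fst c < m \<and> snd c < n then complex_of_real (- 2 * pi) * (complex_of_real (x c) * gauss m n x) else 0)"
    by (simp add: s_def gauss_def D_def)
  ultimately show ?thesis by simp
qed

lemma has_pderiv_coord_mult:
  assumes "((\<lambda>t. f (x(c := x c + t))) has_vector_derivative D) (at 0)"
  shows "((\<lambda>t. complex_of_real ((x(c := x c + t)) d) * f (x(c := x c + t))) has_vector_derivative
    (if d = c then f x else 0) + complex_of_real (x d) * D) (at 0)"
proof -
  have "((\<lambda>t. complex_of_real ((x(c := x c + t)) d)) has_vector_derivative (if d = c then 1 else 0)) (at 0)"
    by (cases "d = c") (auto intro!: derivative_eq_intros)
  from has_vector_derivative_mult[OF this assms]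
  have "((\<lambda>t. complex_of_real ((x(c := x c + t)) d) * f (x(c := x c + t))) has_vector_derivative
    complex_of_real ((x(c := x c + 0)) d) * D + (if d = c then 1 else 0) * f (x(c := x c + 0))) (at 0)" .
  moreover have "complex_of_real ((x(c := x c + 0)) d) * D + (if d = c then 1 else 0) * f (x(c := x c + 0))
    = (if d = c then f x else 0) + complex_of_real (x d) * D" by simp
  ultimately show ?thesis by (simp only:)
qed

lemma gauss_poly_has_pderiv:
  assumes "gauss_poly P f"
  shows "\<exists>f'. gauss_poly (insert c P) f' \<and>
    (\<forall>x. ((\<lambda>t. f (x(c := x c + t))) has_vector_derivative f' x) (at 0))"
  using assms
proof induction
  case gauss_poly_gauss
  let ?f' = "\<lambda>x. if fst c < m \<and> snd c < n then complex_of_real (- 2 * pi) * (complex_of_real (x c) * gauss m n x) else 0"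
  have "gauss_poly (insert c P) (\<lambda>x. complex_of_real (- 2 * pi) * (complex_of_real (x c) * gauss m n x))"
    by (rule gauss_poly_scale, rule gauss_poly_coord, simp, rule gauss_poly_gauss)
  then have "gauss_poly (insert c P) ?f'"
    by (intro gauss_poly_if gauss_poly_zero)
  moreover have "((\<lambda>t. gauss m n (x(c := x c + t))) has_vector_derivative ?f' x) (at 0)" for x
    by (rule has_pderiv_gauss)
  ultimately show ?case by blast
next
  case (gauss_poly_add f g)
  then obtain f' g' where "gauss_poly (insert c P) f'" "gauss_poly (insert c P) g'"
    "\<And>x. ((\<lambda>t. f (x(c := x c + t))) has_vector_derivative f' x) (at 0)"
    "\<And>x. ((\<lambda>t. g (x(c := x c + t))) has_vector_derivative g' x) (at 0)" by blast
  then show ?case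
    by (intro exI[of _ "\<lambda>x. f' x + g' x"] conjI allI gauss_poly.intros has_vector_derivative_add)
next
  case (gauss_poly_scale f a)
  then obtain f' where "gauss_poly (insert c P) f'"
    "\<And>x. ((\<lambda>t. f (x(c := x c + t))) has_vector_derivative f' x) (at 0)" by blast
  then show ?case
    by (intro exI[of _ "\<lambda>x. a * f' x"] conjI allI gauss_poly.intros has_vector_derivative_mult_right)
next
  case (gauss_poly_coord d f)
  then obtain f' where f': "gauss_poly (insert c P) f'"
    "\<And>x. ((\<lambda>t. f (x(c := x c + t))) has_vector_derivative f' x) (at 0)" by blast
  let ?g' = "\<lambda>x. (if d = c then f x else 0) + complex_of_real (x d) * f' x"
  have "gauss_poly (insert c P) ?g'"
    using gauss_poly_coord f'(1) gauss_poly_mono[of P f "insert c P"]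
    by (cases "d = c") (auto intro!: gauss_poly.intros)
  moreover have "((\<lambda>t. complex_of_real ((x(c := x c + t)) d) * f (x(c := x c + t)))
      has_vector_derivative ?g' x) (at 0)" for x
    by (rule has_pderiv_coord_mult[OF f'(2)])
  ultimately show ?case by blast
qed

lemma pderiv_eqI:
  "((\<lambda>t. f (x((k, i) := x (k, i) + t))) has_vector_derivative D) (at 0) \<Longrightarrow> pderiv k i f x = D"
  unfolding pderiv_def by (rule vector_derivative_at)

lemma
  assumes "gauss_poly P f"
  shows has_pderiv_gauss_poly:
      "((\<lambda>t. f (x((k, i) := x (k, i) + t))) has_vector_derivative pderiv k i f x) (at 0)"
    and gauss_poly_pderiv: "gauss_poly (insert (k, i) P) (pderiv k i f)"
proof -
  obtain f' where f': "gauss_poly (insert (k, i) P) f'"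
    "\<And>x. ((\<lambda>t. f (x((k, i) := x (k, i) + t))) has_vector_derivative f' x) (at 0)"
    using gauss_poly_has_pderiv[OF assms] by blast
  moreover have "pderiv k i f = f'"
    using f'(2) by (intro ext pderiv_eqI)
  ultimately show "((\<lambda>t. f (x((k, i) := x (k, i) + t))) has_vector_derivative pderiv k i f x) (at 0)"
    and "gauss_poly (insert (k, i) P) (pderiv k i f)" by simp_all
qed

lemma gauss_poly_UNIV: "gauss_poly P f \<Longrightarrow> gauss_poly UNIV f"
  by (erule gauss_poly_mono) simp

lemma gauss_poly_UNIV_pderiv: "gauss_poly UNIV f \<Longrightarrow> gauss_poly UNIV (pderiv k i f)"
  using gauss_poly_pderiv[of UNIV f k i] by simp

lemma pderiv_add:
  "gauss_poly UNIV f \<Longrightarrow> gauss_poly UNIV g \<Longrightarrow>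
    pderiv k i (\<lambda>x. f x + g x) = (\<lambda>x. pderiv k i f x + pderiv k i g x)"
  by (intro ext pderiv_eqI has_vector_derivative_add has_pderiv_gauss_poly)

lemma pderiv_diff:
  "gauss_poly UNIV f \<Longrightarrow> gauss_poly UNIV g \<Longrightarrow>
    pderiv k i (\<lambda>x. f x - g x) = (\<lambda>x. pderiv k i f x - pderiv k i g x)"
  by (intro ext pderiv_eqI has_vector_derivative_diff has_pderiv_gauss_poly)

lemma pderiv_scale:
  "gauss_poly UNIV f \<Longrightarrow> pderiv k i (\<lambda>x. c * f x) = (\<lambda>x. c * pderiv k i f x)"
  by (intro ext pderiv_eqI has_vector_derivative_mult_right has_pderiv_gauss_poly)

lemma pderiv_coord:
  "gauss_poly UNIV f \<Longrightarrow> pderiv k i (\<lambda>x. complex_of_real (x d) * f x)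
    = (\<lambda>x. (if d = (k, i) then f x else 0) + complex_of_real (x d) * pderiv k i f x)"
  by (intro ext pderiv_eqI has_pderiv_coord_mult has_pderiv_gauss_poly)

lemma pderiv_sum:
  "(\<And>j. j \<in> K \<Longrightarrow> gauss_poly UNIV (f j)) \<Longrightarrow>
    pderiv k i (\<lambda>x. \<Sum>j\<in>K. f j x) = (\<lambda>x. \<Sum>j\<in>K. pderiv k i (f j) x)"
  by (intro ext pderiv_eqI has_vector_derivative_sum has_pderiv_gauss_poly)

lemma pderiv_if: "pderiv k i (\<lambda>x. if b then f x else g x) = (if b then pderiv k i f else pderiv k i g)"
  by (cases b) simp_all

lemma pderiv_zero: "pderiv k i (\<lambda>x. 0) = (\<lambda>x. 0)"
  by (intro ext pderiv_eqI) simp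

lemma pderiv_gauss:
  "pderiv k i (gauss m n) = (\<lambda>x. if k < m \<and> i < n
     then complex_of_real (- 2 * pi) * (complex_of_real (x (k, i)) * gauss m n x) else 0)"
  by (intro ext pderiv_eqI) (use has_pderiv_gauss[of _ "(k, i)"] in simp)

lemma pderiv_pderiv_gauss:
  "pderiv a i (pderiv b j (gauss m n)) x = (if b < m \<and> j < n then complex_of_real (- 2 * pi) *
     ((if (b, j) = (a, i) then gauss m n x else 0) + complex_of_real (x (b, j)) * pderiv a i (gauss m n) x)
   else 0)"
proof -
  have "gauss_poly UNIV (gauss m n)" "gauss_poly UNIV (\<lambda>x. complex_of_real (x (b, j)) * gauss m n x)"
    by (auto intro: gauss_poly.intros)
  then show ?thesis
    unfolding pderiv_gauss[of b j] pderiv_if by (simp only: pderiv_scale pderiv_coord pderiv_zero) simp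
qed

lemma pderiv_pderiv_coord:
  assumes "gauss_poly UNIV f"
  shows "pderiv a i (pderiv b j (\<lambda>x. complex_of_real (x d) * f x)) =
    (\<lambda>x. (if d = (b, j) then pderiv a i f x else 0) + (if d = (a, i) then pderiv b j f x else 0)
      + complex_of_real (x d) * pderiv a i (pderiv b j f) x)"
  using assms by (cases "d = (b, j)")
    (simp_all add: pderiv_coord pderiv_add gauss_poly_UNIV_pderiv gauss_poly_coord add_ac)

lemma pderiv_commute:
  assumes "gauss_poly UNIV f"
  shows "pderiv a i (pderiv b j f) = pderiv b j (pderiv a i f)"
  using assms
proof induction
  case gauss_poly_gauss
  show ?case
    unfolding fun_eq_iff pderiv_pderiv_gauss
    by (cases "(b, j) = (a, i)") (auto simp: pderiv_gauss mult.left_commute)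
next
  case (gauss_poly_add f g)
  then show ?case
    by (simp add: pderiv_add gauss_poly_UNIV_pderiv)
next
  case (gauss_poly_scale f c)
  then show ?case
    by (simp add: pderiv_scale gauss_poly_UNIV_pderiv)
next
  case (gauss_poly_coord d f)
  then show ?case
    by (simp add: pderiv_pderiv_coord add_ac)
qed

lemma pderiv_outside:
  assumes "gauss_poly P f" and "(k, i) \<notin> P" and "k < m" and "i < n"
  shows "pderiv k i f = (\<lambda>x. complex_of_real (- 2 * pi * x (k, i)) * f x)"
  using assms(1)
proof induction
  case gauss_poly_gauss
  show ?case using assms(3,4) by (simp add: pderiv_gauss mult.assoc)
next
  case (gauss_poly_add f g)
  with gauss_poly_add.hyps[THEN gauss_poly_UNIV] show ?case
    by (simp add: pderiv_add algebra_simps)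
next
  case (gauss_poly_scale f c)
  with gauss_poly_scale.hyps[THEN gauss_poly_UNIV] show ?case
    by (simp add: pderiv_scale algebra_simps)
next
  case (gauss_poly_coord d f)
  then have "d \<noteq> (k, i)" using assms(2) by auto
  then show ?case
    unfolding pderiv_coord[OF gauss_poly_UNIV[OF gauss_poly_coord.hyps(2)]] gauss_poly_coord.IH
    by (simp add: algebra_simps)
qed

end

definition creation :: "nat \<Rightarrow> nat \<Rightarrow> (coords \<Rightarrow> complex) \<Rightarrow> coords \<Rightarrow> complex" where
  "creation k i f x = complex_of_real (x (k, i)) * f x - complex_of_real (1 / (2 * pi)) * pderiv k i f x"

lemma Hop_eq_creation: "Hop k i \<Phi> x S w = creation k i (\<lambda>y. \<Phi> y S w) x"
  by (simp add: Hop_def creation_def)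

lemma Hop_fun_eq_creation: "(\<lambda>x. Hop k i \<Phi> x S w) = creation k i (\<lambda>x. \<Phi> x S w)"
  by (simp add: fun_eq_iff Hop_eq_creation)

lemma creation_if:
  "creation k i (\<lambda>x. if b then f x else g x) y = (if b then creation k i f y else creation k i g y)"
  by (cases b) simp_all

lemma creation_zero: "creation k i (\<lambda>x. 0) = (\<lambda>x. 0)"
  by (simp add: fun_eq_iff creation_def pderiv_zero)

context
  fixes m n :: nat
begin

lemma gauss_poly_creation:
  "gauss_poly m n P f \<Longrightarrow> gauss_poly m n (insert (k, i) P) (creation k i f)"
  unfolding creation_def
  by (intro gauss_poly_diff gauss_poly_scale gauss_poly_coord gauss_poly_pderiv insertI1)
    (auto intro: gauss_poly_mono)

lemma pderiv_creation:
  assumes "gauss_poly m n UNIV f"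
  shows "pderiv a i (creation b j f) = (\<lambda>x. (if (b, j) = (a, i) then f x else 0)
    + complex_of_real (x (b, j)) * pderiv a i f x
    - complex_of_real (1 / (2 * pi)) * pderiv a i (pderiv b j f) x)"
  unfolding creation_def[abs_def]
  by (simp only: pderiv_diff[OF gauss_poly_coord[OF UNIV_I assms]
      gauss_poly_scale[OF gauss_poly_UNIV_pderiv[OF assms]]]
      pderiv_coord[OF assms] pderiv_scale[OF gauss_poly_UNIV_pderiv[OF assms]])

lemma creation_commute:
  assumes "gauss_poly m n P f"
  shows "creation a i (creation b j f) = creation b j (creation a i f)"
proof -
  have f: "gauss_poly m n UNIV f" using assms by (rule gauss_poly_UNIV)
  show ?thesis
    unfolding fun_eq_iff creation_def[of a i "creation b j f"] creation_def[of b j "creation a i f"]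
      pderiv_creation[OF f] pderiv_commute[OF f, of a i b j]
    by (cases "(a, i) = (b, j)") (auto simp: creation_def algebra_simps)
qed

lemma creation_lincomb:
  assumes "\<And>k. k \<in> K \<Longrightarrow> gauss_poly m n P (f k)"
  shows "creation a i (\<lambda>x. \<Sum>k\<in>K. c k * f k x) = (\<lambda>x. \<Sum>k\<in>K. c k * creation a i (f k) x)"
proof -
  have f: "gauss_poly m n UNIV (f k)" if "k \<in> K" for k
    using assms[OF that] by (rule gauss_poly_UNIV)
  have "pderiv a i (\<lambda>x. \<Sum>k\<in>K. c k * f k x) = (\<lambda>x. \<Sum>k\<in>K. pderiv a i (\<lambda>x. c k * f k x) x)"
    using f by (intro pderiv_sum gauss_poly_scale)
  also have "\<dots> = (\<lambda>x. \<Sum>k\<in>K. c k * pderiv a i (f k) x)"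
    by (intro ext sum.cong refl) (simp add: pderiv_scale[OF f])
  finally show ?thesis
    unfolding creation_def[abs_def] by (simp add: sum_distrib_left sum_subtractf algebra_simps)
qed

lemma creation_scale:
  assumes "gauss_poly m n P f"
  shows "creation a i (\<lambda>x. c * f x) = (\<lambda>x. c * creation a i f x)"
  using pderiv_scale[OF gauss_poly_UNIV[OF assms], of a i c]
  by (simp add: creation_def fun_eq_iff algebra_simps)

end

section \<open>Coefficient tensors\<close>

lemma tensorsD: "t \<in> tensors d l \<Longrightarrow> w \<notin> idx d l \<Longrightarrow> t w = 0"
  by (auto simp: tensors_def)

lemma finite_idx: "finite (idx d l)"
  unfolding idx_def using finite_lists_length_eq[of "{..<d}" l] by simp

definition tensor_linear :: "((nat list \<Rightarrow> complex) \<Rightarrow> nat list \<Rightarrow> complex) \<Rightarrow> bool" where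
  "tensor_linear L \<longleftrightarrow> (\<forall>s t. L (\<lambda>w. s w + t w) = (\<lambda>w. L s w + L t w))
    \<and> (\<forall>c t. L (\<lambda>w. c * t w) = (\<lambda>w. c * L t w))"

lemma tensor_linear_scale: "tensor_linear L \<Longrightarrow> L (\<lambda>w. c * t w) = (\<lambda>w. c * L t w)"
  unfolding tensor_linear_def by simp

lemma tensor_linear_zero: "tensor_linear L \<Longrightarrow> L (\<lambda>w. 0) = (\<lambda>w. 0)"
  using tensor_linear_scale[of L 0 "\<lambda>w. 0"] by simp

lemma tensor_linear_lincomb:
  assumes "tensor_linear L"
  shows "L (\<lambda>w. \<Sum>k\<in>K. c k * t k w) = (\<lambda>w. \<Sum>k\<in>K. c k * L (t k) w)"
proof (induction K rule: infinite_finite_induct)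
  case (insert k K)
  then show ?case using assms by (simp add: tensor_linear_def)
qed (simp_all add: tensor_linear_zero[OF assms])

lemma tensor_linear_sum: "tensor_linear L \<Longrightarrow> L (\<lambda>w. \<Sum>k\<in>K. t k w) = (\<lambda>w. \<Sum>k\<in>K. L (t k) w)"
  using tensor_linear_lincomb[of L "\<lambda>_. 1"] by simp

lemma tensor_linear_diff:
  assumes "tensor_linear L"
  shows "L (\<lambda>w. s w - t w) = (\<lambda>w. L s w - L t w)"
proof -
  have add: "L (\<lambda>w. s w + t w) = (\<lambda>w. L s w + L t w)" for s t
    using assms by (simp add: tensor_linear_def)
  have "L (\<lambda>w. s w + (-1) * t w) = (\<lambda>w. L s w + L (\<lambda>w. (-1) * t w) w)"
    by (rule add)
  also have "\<dots> = (\<lambda>w. L s w + (-1) * L t w)"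
    by (simp only: tensor_linear_scale[OF assms])
  finally show ?thesis by simp
qed

lemma tensor_linear_comp: "tensor_linear L1 \<Longrightarrow> tensor_linear L2 \<Longrightarrow> tensor_linear (\<lambda>t. L2 (L1 t))"
  unfolding tensor_linear_def by simp

definition unit_tensor :: "nat list \<Rightarrow> nat list \<Rightarrow> complex" where
  "unit_tensor v = (\<lambda>w. if w = v then 1 else 0)"

lemma tensor_linear_expand:
  assumes "tensor_linear L" and "t \<in> tensors d l"
  shows "L t w = (\<Sum>v\<in>idx d l. t v * L (unit_tensor v) w)"
proof -
  have "t = (\<lambda>w. \<Sum>v\<in>idx d l. t v * unit_tensor v w)"
    using assms(2) by (auto simp: fun_eq_iff unit_tensor_def tensors_def finite_idx if_distrib cong: if_cong)
  then have "L t w = L (\<lambda>w. \<Sum>v\<in>idx d l. t v * unit_tensor v w) w" by simp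
  then show ?thesis by (simp add: tensor_linear_lincomb[OF assms(1)])
qed

definition rho_tensor :: "nat \<Rightarrow> nat \<Rightarrow> (nat list \<Rightarrow> complex) \<Rightarrow> nat list \<Rightarrow> complex" where
  "rho_tensor a m t = (\<lambda>w. \<Sum>j<length w. if w ! j = m then t (w[j := a]) else if w ! j = a then t (w[j := m]) else 0)"

lemma rhoX_eq_rho_tensor: "rhoX a m \<Phi> x S = rho_tensor a m (\<Phi> x S)"
  unfolding rhoX_def rho_tensor_def ..

lemma tensor_linear_rho_tensor: "tensor_linear (rho_tensor a m)"
  unfolding tensor_linear_def rho_tensor_def
  by (auto simp: fun_eq_iff sum_distrib_left simp flip: sum.distrib intro!: sum.cong)

lemma rho_tensor_length: "t \<in> tensors d l \<Longrightarrow> length w \<noteq> l \<Longrightarrow> rho_tensor a m t w = 0"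
  unfolding rho_tensor_def tensors_def idx_def by (intro sum.neutral) auto

lemma rho_tensor_tensors:
  assumes "a < d" and "m < d" and "u \<in> tensors d l"
  shows "rho_tensor a m u \<in> tensors d l"
proof -
  have "u (w[j := x]) = 0" if "w \<notin> idx d l" "j < length w" "w ! j < d" for w j x
  proof -
    have "set w \<subseteq> insert (w ! j) (set (w[j := x]))"
      by (metis list_update_id list_update_overwrite set_update_subset_insert)
    then have "w[j := x] \<notin> idx d l" using that by (auto simp: idx_def)
    then show ?thesis using assms(3) by (auto simp: tensors_def)
  qed
  then show ?thesis
    using assms(1,2) by (auto simp: tensors_def rho_tensor_def intro!: sum.neutral)
qed

lemma permT_update:
  assumes "s permutes {..<l}" and "length w = l" and "k < l"
  shows "(map (\<lambda>j. w ! s j) [0..<l])[k := v] = map (\<lambda>j. w[s k := v] ! s j) [0..<l]"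
proof -
  have "s j < l" if "j < l" for j using permutes_in_image[OF assms(1)] that by simp
  moreover have "s i = s j \<longleftrightarrow> i = j" for i j using permutes_inj[OF assms(1)] by (auto dest: injD)
  ultimately show ?thesis
    using assms(2,3) by (intro nth_equalityI) (auto simp: nth_list_update)
qed

lemma permT_rho_tensor:
  assumes s: "s permutes {..<l}" and t: "t \<in> tensors d l"
  shows "permT s (rho_tensor a m t) w = rho_tensor a m (permT s t) w"
proof (cases "length w = l")
  case False
  have "t (map (\<lambda>i. v ! s i) [0..<length v]) = 0" if "length v = length w" for v
    using t False that by (auto simp: tensors_def idx_def)
  then show ?thesis
    using rho_tensor_length[OF t, of "map (\<lambda>j. w ! s j) [0..<length w]"] False
    by (simp add: permT_def rho_tensor_def cong: if_cong)
next
  case True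
  define g where "g j = (if w ! j = m then t (map (\<lambda>i. w[j := a] ! s i) [0..<l])
      else if w ! j = a then t (map (\<lambda>i. w[j := m] ! s i) [0..<l]) else 0)" for j
  have "permT s (rho_tensor a m t) w = (\<Sum>k<l. g (s k))"
    unfolding permT_def rho_tensor_def g_def True
  proof (rule sum.cong)
    fix k
    assume "k \<in> {..<l}"
    then show "(if map (\<lambda>j. w ! s j) [0..<l] ! k = m then t ((map (\<lambda>j. w ! s j) [0..<l])[k := a])
       else if map (\<lambda>j. w ! s j) [0..<l] ! k = a then t ((map (\<lambda>j. w ! s j) [0..<l])[k := m]) else 0) =
      (if w ! s k = m then t (map (\<lambda>i. w[s k := a] ! s i) [0..<l])
       else if w ! s k = a then t (map (\<lambda>i. w[s k := m] ! s i) [0..<l]) else 0)"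
      using permT_update[OF s True, of k] by (simp cong: if_cong)
  qed simp
  also have "\<dots> = sum g {..<l}"
    using sum.reindex[OF permutes_inj_on[OF s], of g "{..<l}"] permutes_image[OF s] by (simp add: comp_def)
  also have "\<dots> = rho_tensor a m (permT s t) w"
    unfolding permT_def rho_tensor_def g_def using True by (simp cong: if_cong)
  finally show ?thesis .
qed

lemma tensor_linear_young_proj: "tensor_linear (young_proj lam)"
  unfolding tensor_linear_def young_proj_def young_sym_def permT_def
  by (simp add: sum.distrib ring_distribs sum_distrib_left mult_ac)

lemma young_proj_rho_tensor:
  assumes "t \<in> tensors d (sum_list lam)"
  shows "young_proj lam (rho_tensor a m t) = rho_tensor a m (young_proj lam t)"
proof -
  have "s \<circ> r permutes {..<sum_list lam}" if "s \<in> row_group lam" "r \<in> col_group lam" for s r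
    using that unfolding row_group_def col_group_def by (auto intro: permutes_compose)
  then have "young_sym lam (rho_tensor a m t) = (\<lambda>w. \<Sum>s\<in>row_group lam. \<Sum>r\<in>col_group lam.
      of_int (sign r) * rho_tensor a m (permT (s \<circ> r) t) w)"
    unfolding young_sym_def by (intro ext sum.cong refl) (simp add: permT_rho_tensor[OF _ assms])
  also have "\<dots> = rho_tensor a m (young_sym lam t)"
    unfolding young_sym_def
    by (simp add: tensor_linear_sum[OF tensor_linear_rho_tensor] tensor_linear_scale[OF tensor_linear_rho_tensor])
  finally show ?thesis
    unfolding young_proj_def tensor_linear_scale[OF tensor_linear_rho_tensor] by simp
qed

section \<open>The harmonic projection\<close>

lemma herm_add_left: "herm d l (\<lambda>w. s w + s' w) t = herm d l s t + herm d l s' t"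
  unfolding herm_def by (simp add: sum.distrib ring_distribs)

lemma herm_add_right: "herm d l s (\<lambda>w. t w + t' w) = herm d l s t + herm d l s t'"
  unfolding herm_def by (simp add: sum.distrib ring_distribs)

lemma herm_diff_left: "herm d l (\<lambda>w. s w - s' w) t = herm d l s t - herm d l s' t"
  unfolding herm_def by (simp add: sum_subtractf ring_distribs)

lemma herm_scale_left: "herm d l (\<lambda>w. c * s w) t = c * herm d l s t"
  unfolding herm_def by (simp add: sum_distrib_left mult_ac)

lemma herm_lincomb_right:
  "herm d l s (\<lambda>w. \<Sum>k\<in>K. c k * t k w) = (\<Sum>k\<in>K. cnj (c k) * herm d l s (t k))"
  unfolding herm_def by (simp add: sum_distrib_left sum_distrib_right mult_ac sum.swap[of _ K])

lemma herm_commute: "herm d l t s = cnj (herm d l s t)"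
  unfolding herm_def by (simp add: mult.commute)

lemma herm_cong_left: "(\<And>w. w \<in> idx d l \<Longrightarrow> s w = s' w) \<Longrightarrow> herm d l s t = herm d l s' t"
  unfolding herm_def by (intro sum.cong refl) auto

lemma herm_self_eq_0D:
  assumes "herm d l s s = 0" and "w \<in> idx d l"
  shows "s w = 0"
proof -
  have "herm d l s s = complex_of_real (\<Sum>v\<in>idx d l. (norm (s v))\<^sup>2)"
    unfolding herm_def of_real_sum by (simp flip: complex_norm_square)
  with assms(1) have "(\<Sum>v\<in>idx d l. (norm (s v))\<^sup>2) = 0" by (metis of_real_eq_0_iff)
  with assms(2) show ?thesis by (simp add: sum_nonneg_eq_0_iff finite_idx)
qed

definition lincomb :: "(nat list \<Rightarrow> complex) set \<Rightarrow> ((nat list \<Rightarrow> complex) \<Rightarrow> complex) \<Rightarrow> nat list \<Rightarrow> complex" where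
  "lincomb R c = (\<lambda>v. \<Sum>s\<in>R. c s * s v)"

lemma lincomb_tensors: "\<forall>r\<in>R. r \<in> tensors d l \<Longrightarrow> lincomb R c \<in> tensors d l"
  unfolding tensors_def lincomb_def by (auto intro!: sum.neutral)

lemma orthogonal_residual_exists:
  assumes "finite R"
  shows "\<exists>c. \<forall>r\<in>R. herm d l (\<lambda>w. t w - lincomb R c w) r = 0"
  using assms
proof (induction R arbitrary: t rule: finite_induct)
  case (insert r R)
  obtain cr where cr: "\<forall>s\<in>R. herm d l (\<lambda>w. r w - lincomb R cr w) s = 0" using insert.IH by blast
  obtain ct where ct: "\<forall>s\<in>R. herm d l (\<lambda>w. t w - lincomb R ct w) s = 0" using insert.IH by blast
  define r' where "r' = (\<lambda>w. r w - lincomb R cr w)"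
  define X where "X = (\<lambda>w. t w - lincomb R ct w)"
  \<comment> \<open>if \<open>r'\<close> has norm 0, then \<open>\<beta> = 0\<close> by the convention \<open>x / 0 = 0\<close>\<close>
  define \<beta> where "\<beta> = herm d l X r' / herm d l r' r'"
  define c where "c = (\<lambda>s. if s = r then \<beta> else ct s - \<beta> * cr s)"
  define e where "e = (\<lambda>w. X w - \<beta> * r' w)"
  have "lincomb (insert r R) c w = \<beta> * r w + (\<Sum>s\<in>R. (ct s - \<beta> * cr s) * s w)" for w
    unfolding lincomb_def c_def using insert.hyps by (auto intro!: sum.cong)
  then have e_eq: "(\<lambda>w. t w - lincomb (insert r R) c w) = e"
    by (simp add: fun_eq_iff e_def X_def r'_def lincomb_def sum_subtractf ring_distribs
        sum_distrib_left algebra_simps)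
  have eR: "herm d l e s = 0" if "s \<in> R" for s
    using that ct cr unfolding e_def X_def r'_def by (simp add: herm_diff_left herm_scale_left)
  have "herm d l X r' = \<beta> * herm d l r' r'"
  proof (cases "herm d l r' r' = 0")
    case True
    then have "herm d l X r' = herm d l X (\<lambda>w. 0)"
      unfolding herm_def by (intro sum.cong refl) (simp add: herm_self_eq_0D[OF True])
    then show ?thesis using True by (simp add: herm_def)
  qed (simp add: \<beta>_def)
  then have "herm d l e r' = 0"
    unfolding e_def by (simp add: herm_diff_left herm_scale_left)
  moreover have "herm d l e r = herm d l e r' + (\<Sum>s\<in>R. cnj (cr s) * herm d l e s)"
    using herm_add_right[of d l e r' "lincomb R cr"] by (simp add: r'_def lincomb_def herm_lincomb_right)
  ultimately show ?case
    using eR e_eq by (intro exI[of _ c]) simp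
qed simp

definition ins2_index :: "nat \<Rightarrow> nat \<Rightarrow> nat \<Rightarrow> nat" where
  "ins2_index a b j = (if j < a then j else if j < b then j - 1 else j - 2)"

lemma length_ins2[simp]: "length (ins2 a b k w') = length w' + 2"
  unfolding ins2_def by simp

lemma nth_ins2:
  "j < length w' + 2 \<Longrightarrow> ins2 a b k w' ! j = (if j = a \<or> j = b then k else w' ! ins2_index a b j)"
  unfolding ins2_def ins2_index_def by (simp del: upt_Suc)

lemma ins2_index_less:
  "a < b \<Longrightarrow> b < length w' + 2 \<Longrightarrow> j < length w' + 2 \<Longrightarrow> j \<noteq> a \<Longrightarrow> j \<noteq> b \<Longrightarrow>
    ins2_index a b j < length w'"
  unfolding ins2_index_def by auto

lemma ins2_index_inj:
  "a < b \<Longrightarrow> i \<noteq> a \<Longrightarrow> i \<noteq> b \<Longrightarrow> j \<noteq> a \<Longrightarrow> j \<noteq> b \<Longrightarrow> ins2_index a b i = ins2_index a b j \<Longrightarrow> i = j"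
  unfolding ins2_index_def by (auto split: if_splits)

lemma ins2_index_surj:
  assumes "a < b" and "i < n"
  obtains j where "j < n + 2" "j \<noteq> a" "j \<noteq> b" "ins2_index a b j = i"
proof
  let ?j = "if i < a then i else if i + 1 < b then i + 1 else i + 2"
  show "?j < n + 2" "?j \<noteq> a" "?j \<noteq> b" "ins2_index a b ?j = i"
    using assms by (auto simp: ins2_index_def)
qed

lemma set_ins2:
  assumes "a < b" and "b < length w' + 2"
  shows "set (ins2 a b k w') = insert k (set w')"
proof (intro equalityI subsetI)
  fix x
  assume "x \<in> set (ins2 a b k w')"
  then obtain j where j: "j < length w' + 2" "x = ins2 a b k w' ! j" by (auto simp: in_set_conv_nth)
  show "x \<in> insert k (set w')"
  proof (cases "j = a \<or> j = b")
    case False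
    with assms j have "ins2_index a b j < length w'" by (intro ins2_index_less) auto
    with False j show ?thesis by (simp add: nth_ins2)
  qed (use j in \<open>simp add: nth_ins2\<close>)
next
  fix x
  assume "x \<in> insert k (set w')"
  then consider "x = k" | i where "i < length w'" "x = w' ! i" by (auto simp: in_set_conv_nth)
  then show "x \<in> set (ins2 a b k w')"
  proof cases
    case 1
    with assms have "ins2 a b k w' ! a = x" by (simp add: nth_ins2)
    with assms show ?thesis by (metis length_ins2 nth_mem order.strict_trans)
  next
    case 2
    obtain j where "j < length w' + 2" "j \<noteq> a" "j \<noteq> b" "ins2_index a b j = i"
      using assms(1) 2(1) by (rule ins2_index_surj)
    with 2 show ?thesis by (metis length_ins2 nth_ins2 nth_mem)
  qed
qed

lemma ins2_in_idx_iff: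
  assumes "a < b" and "b < l"
  shows "ins2 a b k w' \<in> idx d l \<longleftrightarrow> k < d \<and> w' \<in> idx d (l - 2)"
  using assms set_ins2[OF assms(1), of w' k] by (auto simp: idx_def)

definition contraction_vector :: "nat \<Rightarrow> nat \<Rightarrow> nat \<Rightarrow> nat \<Rightarrow> nat list \<Rightarrow> nat list \<Rightarrow> complex" where
  "contraction_vector p q a b w' = (\<lambda>v. \<Sum>k<p + q. eta p k * unit_tensor (ins2 a b k w') v)"

definition contraction_vectors :: "nat \<Rightarrow> nat \<Rightarrow> nat \<Rightarrow> (nat list \<Rightarrow> complex) set" where
  "contraction_vectors p q l = (\<lambda>(a, b, w'). contraction_vector p q a b w') `
     {(a, b, w'). a < b \<and> b < l \<and> w' \<in> idx (p + q) (l - 2)}"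

lemma finite_contraction_vectors: "finite (contraction_vectors p q l)"
proof -
  have "{(a, b, w'). a < b \<and> b < l \<and> w' \<in> idx (p + q) (l - 2)} \<subseteq> {..<l} \<times> {..<l} \<times> idx (p + q) (l - 2)"
    by auto
  then have "finite {(a, b, w'). a < b \<and> b < l \<and> w' \<in> idx (p + q) (l - 2)}"
    by (rule finite_subset) (simp add: finite_idx)
  then show ?thesis
    unfolding contraction_vectors_def by simp
qed

lemma contraction_vectors_tensors: "r \<in> contraction_vectors p q l \<Longrightarrow> r \<in> tensors (p + q) l"
  by (auto simp: contraction_vectors_def contraction_vector_def tensors_def unit_tensor_def
      ins2_in_idx_iff intro!: sum.neutral)

lemma cnj_eta [simp]: "cnj (eta p k) = eta p k"
  by (simp add: eta_def)

lemma herm_contraction_vector: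
  assumes "a < b" and "b < l" and "w' \<in> idx (p + q) (l - 2)"
  shows "herm (p + q) l t (contraction_vector p q a b w') = contr p q a b t w'"
proof -
  have "herm (p + q) l t (contraction_vector p q a b w')
      = (\<Sum>v\<in>idx (p + q) l. \<Sum>k<p + q. eta p k * (if v = ins2 a b k w' then t v else 0))"
    unfolding herm_def contraction_vector_def unit_tensor_def
    by (simp add: sum_distrib_left mult_ac if_distrib cong: if_cong)
  also have "\<dots> = (\<Sum>k<p + q. eta p k * (\<Sum>v\<in>idx (p + q) l. if v = ins2 a b k w' then t v else 0))"
    by (subst sum.swap) (simp add: sum_distrib_left)
  also have "\<dots> = contr p q a b t w'"
    using assms by (simp add: contr_def ins2_in_idx_iff finite_idx)
  finally show ?thesis .
qed

lemma harmonic_iff_orthogonal: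
  "t \<in> harmonic p q l \<longleftrightarrow> t \<in> tensors (p + q) l \<and> (\<forall>r\<in>contraction_vectors p q l. herm (p + q) l t r = 0)"
proof
  assume "t \<in> harmonic p q l"
  then show "t \<in> tensors (p + q) l \<and> (\<forall>r\<in>contraction_vectors p q l. herm (p + q) l t r = 0)"
    by (auto simp: harmonic_def contraction_vectors_def herm_contraction_vector)
next
  assume t: "t \<in> tensors (p + q) l \<and> (\<forall>r\<in>contraction_vectors p q l. herm (p + q) l t r = 0)"
  have "contr p q a b t w' = 0" if "a < b" "b < l" for a b w'
  proof (cases "w' \<in> idx (p + q) (l - 2)")
    case True
    then have "contraction_vector p q a b w' \<in> contraction_vectors p q l"
      using that by (force simp: contraction_vectors_def)
    with t have "herm (p + q) l t (contraction_vector p q a b w') = 0" by blast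
    with that True show ?thesis by (simp add: herm_contraction_vector)
  next
    case False
    with t that show ?thesis
      by (auto simp: contr_def tensors_def ins2_in_idx_iff intro!: sum.neutral)
  qed
  with t show "t \<in> harmonic p q l" by (simp add: harmonic_def)
qed

lemma harmonic_lincomb:
  assumes "s \<in> harmonic p q l" and "t \<in> harmonic p q l"
  shows "(\<lambda>w. c * s w + c' * t w) \<in> harmonic p q l"
proof -
  have "c * s w + c' * t w = 0" if "w \<notin> idx (p + q) l" for w
    using assms that by (auto simp: harmonic_def tensorsD)
  then have "(\<lambda>w. c * s w + c' * t w) \<in> tensors (p + q) l"
    unfolding tensors_def by blast
  with assms show ?thesis
    by (simp add: harmonic_iff_orthogonal herm_add_left herm_scale_left)
qed

definition is_harm_proj :: "nat \<Rightarrow> nat \<Rightarrow> nat \<Rightarrow> (nat list \<Rightarrow> complex) \<Rightarrow> (nat list \<Rightarrow> complex) \<Rightarrow> bool" where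
  "is_harm_proj p q l t h \<longleftrightarrow> h \<in> harmonic p q l \<and> (\<forall>u\<in>harmonic p q l. herm (p + q) l (\<lambda>w. t w - h w) u = 0)"

text \<open>The harmonic tensors are the orthogonal complement of the contraction vectors, so the
  residual of the orthogonal projection onto their span is the harmonic projection.\<close>
lemma is_harm_proj_exists: "\<exists>h. is_harm_proj p q l t h"
proof -
  define R where "R = contraction_vectors p q l"
  define t' where "t' = (\<lambda>w. if w \<in> idx (p + q) l then t w else 0)"
  obtain c where c: "\<forall>r\<in>R. herm (p + q) l (\<lambda>w. t' w - lincomb R c w) r = 0"
    using orthogonal_residual_exists[OF finite_contraction_vectors] unfolding R_def by blast
  define h where "h = (\<lambda>w. t' w - lincomb R c w)"
  have "lincomb R c \<in> tensors (p + q) l"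
    unfolding R_def by (intro lincomb_tensors ballI contraction_vectors_tensors)
  then have "h \<in> tensors (p + q) l"
    by (auto simp: h_def t'_def tensors_def)
  with c have harmonic: "h \<in> harmonic p q l"
    by (simp add: harmonic_iff_orthogonal h_def R_def)
  have "herm (p + q) l (\<lambda>w. t w - h w) u = 0" if "u \<in> harmonic p q l" for u
  proof -
    have "herm (p + q) l (\<lambda>w. t w - h w) u = cnj (herm (p + q) l u (lincomb R c))"
      by (subst herm_commute) (auto intro!: herm_cong_left simp: h_def t'_def)
    also have "\<dots> = 0"
      using that by (simp add: lincomb_def herm_lincomb_right harmonic_iff_orthogonal R_def)
    finally show ?thesis .
  qed
  with harmonic show ?thesis
    unfolding is_harm_proj_def by blast
qed

lemma is_harm_proj_unique:
  assumes "is_harm_proj p q l t h" and "is_harm_proj p q l t h'"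
  shows "h = h'"
proof -
  define d where "d = (\<lambda>w. 1 * h w + (-1) * h' w)"
  have d: "d \<in> harmonic p q l"
    using assms unfolding d_def is_harm_proj_def by (intro harmonic_lincomb) auto
  have "herm (p + q) l d d = herm (p + q) l (\<lambda>w. t w - h' w) d - herm (p + q) l (\<lambda>w. t w - h w) d"
    unfolding d_def by (simp add: herm_diff_left[symmetric])
  also have "\<dots> = 0"
    using assms d by (simp add: is_harm_proj_def)
  finally have "d w = 0" for w
    using d by (cases "w \<in> idx (p + q) l") (auto simp: herm_self_eq_0D harmonic_def tensors_def)
  then show ?thesis
    by (auto simp: fun_eq_iff d_def)
qed

lemma harm_proj_spec: "is_harm_proj p q l t (harm_proj p q l t)"
proof -
  have "\<exists>!h. is_harm_proj p q l t h"
    using is_harm_proj_exists is_harm_proj_unique by blast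
  then show ?thesis
    unfolding harm_proj_def is_harm_proj_def[symmetric] by (rule theI')
qed

lemma harm_proj_eqI: "is_harm_proj p q l t h \<Longrightarrow> harm_proj p q l t = h"
  using harm_proj_spec is_harm_proj_unique by metis

lemma is_harm_proj_lincomb:
  assumes "is_harm_proj p q l s g" and "is_harm_proj p q l t h"
  shows "is_harm_proj p q l (\<lambda>w. c * s w + c' * t w) (\<lambda>w. c * g w + c' * h w)"
proof -
  have "herm (p + q) l (\<lambda>w. (c * s w + c' * t w) - (c * g w + c' * h w)) u
      = c * herm (p + q) l (\<lambda>w. s w - g w) u + c' * herm (p + q) l (\<lambda>w. t w - h w) u" for u
    by (simp add: herm_add_left[symmetric] herm_scale_left[symmetric] algebra_simps)
  with assms show ?thesis
    by (simp add: is_harm_proj_def harmonic_lincomb)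
qed

lemma tensor_linear_harm_proj: "tensor_linear (harm_proj p q l)"
  unfolding tensor_linear_def
proof (intro conjI allI)
  fix s t c
  show "harm_proj p q l (\<lambda>w. s w + t w) = (\<lambda>w. harm_proj p q l s w + harm_proj p q l t w)"
    using is_harm_proj_lincomb[OF harm_proj_spec harm_proj_spec, where c = 1 and c' = 1]
    by (simp add: harm_proj_eqI)
  show "harm_proj p q l (\<lambda>w. c * t w) = (\<lambda>w. c * harm_proj p q l t w)"
    using is_harm_proj_lincomb[OF harm_proj_spec harm_proj_spec, where c = c and c' = 0 and t = t]
    by (simp add: harm_proj_eqI)
qed

lemma ins2_update:
  assumes ce: "c < e" "e < length w' + 2" and j: "j < length w' + 2" "j \<noteq> c" "j \<noteq> e"
  shows "(ins2 c e k w')[j := x] = ins2 c e k (w'[ins2_index c e j := x])"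
proof (rule nth_equalityI)
  show "length ((ins2 c e k w')[j := x]) = length (ins2 c e k (w'[ins2_index c e j := x]))" by simp
next
  fix i assume "i < length ((ins2 c e k w')[j := x])"
  then have i: "i < length w' + 2" by simp
  have aj: "ins2_index c e j < length w'" using ins2_index_less[OF ce j] .
  show "(ins2 c e k w')[j := x] ! i = ins2 c e k (w'[ins2_index c e j := x]) ! i"
  proof (cases "i = j")
    case True
    then show ?thesis using i j aj by (simp add: nth_ins2)
  next
    case False
    show ?thesis
    proof (cases "i = c \<or> i = e")
      case True
      then show ?thesis using False i by (simp add: nth_ins2)
    next
      case F2: False
      have "ins2_index c e i \<noteq> ins2_index c e j" using ins2_index_inj[OF ce(1)] F2 j False by blast
      then show ?thesis using False F2 i by (simp add: nth_ins2)
    qed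
  qed
qed

lemma ins2_update_swap:
  assumes "c < e" and "e < length w' + 2"
  shows "(ins2 c e m w')[c := a] = (ins2 c e a w')[e := m]"
  using assms by (intro nth_equalityI) (auto simp: nth_ins2 nth_list_update)

definition rho_term :: "nat \<Rightarrow> nat \<Rightarrow> (nat list \<Rightarrow> complex) \<Rightarrow> nat list \<Rightarrow> nat \<Rightarrow> complex" where
  "rho_term a m t w j = (if w ! j = m then t (w[j := a]) else if w ! j = a then t (w[j := m]) else 0)"

lemma rho_term_zero [simp]: "rho_term a m (\<lambda>w. 0) w j = 0"
  by (simp add: rho_term_def)

lemma rho_tensor_eq_sum_rho_term: "rho_tensor a m t w = (\<Sum>j<length w. rho_term a m t w j)"
  by (simp add: rho_tensor_def rho_term_def)

text \<open>In the contraction of \<open>\<rho>(X) u\<close> over two slots, the terms in which \<open>X\<close> acts on a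
  contracted slot cancel, since \<open>X\<close> is skew for the quadratic form (\<open>\<eta>\<^sub>a = 1\<close>, \<open>\<eta>\<^sub>m = -1\<close>).\<close>
lemma contr_rho_term_contracted_slots:
  assumes "a < p" and "p \<le> m" and "m < p + q" and "c < e" and "e < length w' + 2"
  shows "(\<Sum>k<p + q. eta p k * (rho_term a m u (ins2 c e k w') c + rho_term a m u (ins2 c e k w') e)) = 0"
proof -
  define X where "X = u ((ins2 c e m w')[c := a]) + u ((ins2 c e m w')[e := a])"
  have "eta p k * (rho_term a m u (ins2 c e k w') c + rho_term a m u (ins2 c e k w') e)
      = (if k = m then - X else 0) + (if k = a then X else 0)" for k
    using assms ins2_update_swap[OF assms(4,5)]
    by (auto simp: rho_term_def nth_ins2 eta_def X_def)
  then show ?thesis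
    using assms by (simp add: sum.distrib)
qed

lemma contr_rho_term_free_slot:
  assumes "c < e" and "e < length w' + 2" and "j < length w' + 2" and "j \<noteq> c" and "j \<noteq> e"
  shows "(\<Sum>k<p + q. eta p k * rho_term a m u (ins2 c e k w') j)
    = rho_term a m (contr p q c e u) w' (ins2_index c e j)"
  using assms by (simp add: rho_term_def nth_ins2 ins2_update contr_def)

lemma harmonic_rho_tensor:
  assumes "a < p" and "p \<le> m" and "m < p + q" and "u \<in> harmonic p q l"
  shows "rho_tensor a m u \<in> harmonic p q l"
proof -
  have u: "u \<in> tensors (p + q) l" and contr_u: "\<And>c e. c < e \<Longrightarrow> e < l \<Longrightarrow> contr p q c e u = (\<lambda>w'. 0)"
    using assms(4) by (auto simp: harmonic_def)
  have "contr p q c e (rho_tensor a m u) w' = 0" if "c < e" "e < l" for c e w'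
  proof (cases "length w' + 2 = l")
    case False
    then show ?thesis by (simp add: contr_def rho_tensor_length[OF u])
  next
    case True
    define f where "f j = (\<Sum>k<p + q. eta p k * rho_term a m u (ins2 c e k w') j)" for j
    have "contr p q c e (rho_tensor a m u) w' = (\<Sum>j<l. f j)"
      unfolding contr_def f_def rho_tensor_eq_sum_rho_term using True
      by (simp add: sum_distrib_left) (rule sum.swap)
    also have "\<dots> = (\<Sum>j\<in>{..<l} - {c, e}. f j) + (f c + f e)"
      using that by (subst sum.subset_diff[of "{c, e}"]) auto
    also have "f c + f e = 0"
      using contr_rho_term_contracted_slots[OF assms(1-3) that(1)] that True
      by (simp add: f_def sum.distrib[symmetric] ring_distribs)
    also have "(\<Sum>j\<in>{..<l} - {c, e}. f j) = 0"
      using that True contr_u by (auto simp: f_def contr_rho_term_free_slot intro!: sum.neutral)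
    finally show ?thesis by simp
  qed
  with u assms(1-3) show ?thesis
    by (simp add: harmonic_def rho_tensor_tensors)
qed

text \<open>\<open>\<rho>(X\<^sub>a\<^sub>m)\<close> is the sum of the derivation actions of the elementary maps \<open>e\<^sub>a \<mapsto> e\<^sub>m\<close> and
  \<open>e\<^sub>m \<mapsto> e\<^sub>a\<close>, which are adjoint to each other.\<close>
definition elem_tensor :: "nat \<Rightarrow> nat \<Rightarrow> (nat list \<Rightarrow> complex) \<Rightarrow> nat list \<Rightarrow> complex" where
  "elem_tensor a m t = (\<lambda>w. \<Sum>j<length w. if w ! j = m then t (w[j := a]) else 0)"

lemma rho_tensor_eq_elem_tensor:
  "a \<noteq> m \<Longrightarrow> rho_tensor a m t = (\<lambda>w. elem_tensor a m t w + elem_tensor m a t w)"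
  by (auto simp: fun_eq_iff rho_tensor_def elem_tensor_def simp flip: sum.distrib intro!: sum.cong)

lemma sum_idx_update_swap:
  assumes "j < l" and "a < d" and "m < d"
  shows "(\<Sum>w\<in>idx d l. if w ! j = m then f (w[j := a]) w else 0)
    = (\<Sum>v\<in>idx d l. if v ! j = a then f v (v[j := m]) else 0)"
proof -
  have "(\<Sum>w\<in>idx d l. if w ! j = m then f (w[j := a]) w else 0) = (\<Sum>w\<in>{w \<in> idx d l. w ! j = m}. f (w[j := a]) w)"
    by (simp add: sum.inter_filter finite_idx)
  also have "\<dots> = (\<Sum>v\<in>{v \<in> idx d l. v ! j = a}. f v (v[j := m]))"
    by (rule sum.reindex_bij_witness[where i = "\<lambda>v. v[j := m]" and j = "\<lambda>w. w[j := a]"])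
      (use assms in \<open>auto simp: idx_def dest: set_update_subset_insert[THEN subsetD]\<close>)
  also have "\<dots> = (\<Sum>v\<in>idx d l. if v ! j = a then f v (v[j := m]) else 0)"
    by (simp add: sum.inter_filter finite_idx)
  finally show ?thesis .
qed

lemma herm_elem_tensor:
  assumes "a < d" and "m < d"
  shows "herm d l (elem_tensor a m s) u = herm d l s (elem_tensor m a u)"
proof -
  have "herm d l (elem_tensor a m s) u
      = (\<Sum>j<l. \<Sum>w\<in>idx d l. if w ! j = m then s (w[j := a]) * cnj (u w) else 0)"
    unfolding herm_def elem_tensor_def
    by (subst sum.swap) (auto simp: idx_def sum_distrib_right intro!: sum.cong)
  also have "\<dots> = (\<Sum>j<l. \<Sum>v\<in>idx d l. if v ! j = a then s v * cnj (u (v[j := m])) else 0)"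
    by (rule sum.cong[OF refl])
      (use assms in \<open>simp add: sum_idx_update_swap[where f = "\<lambda>v w. s v * cnj (u w)"]\<close>)
  also have "\<dots> = herm d l s (elem_tensor m a u)"
    unfolding herm_def elem_tensor_def
    by (subst sum.swap) (auto simp: idx_def sum_distrib_left intro!: sum.cong)
  finally show ?thesis .
qed

lemma herm_rho_tensor:
  "a < d \<Longrightarrow> m < d \<Longrightarrow> a \<noteq> m \<Longrightarrow> herm d l (rho_tensor a m s) u = herm d l s (rho_tensor a m u)"
  by (simp add: rho_tensor_eq_elem_tensor herm_add_left herm_add_right herm_elem_tensor add.commute)

lemma harm_proj_rho_tensor:
  assumes "a < p" and "p \<le> m" and "m < p + q"
  shows "harm_proj p q l (rho_tensor a m t) = rho_tensor a m (harm_proj p q l t)"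
proof (rule harm_proj_eqI)
  let ?h = "harm_proj p q l t"
  have h: "?h \<in> harmonic p q l" and orth: "\<And>u. u \<in> harmonic p q l \<Longrightarrow> herm (p + q) l (\<lambda>w. t w - ?h w) u = 0"
    using harm_proj_spec[of p q l t] by (auto simp: is_harm_proj_def)
  have "herm (p + q) l (\<lambda>w. rho_tensor a m t w - rho_tensor a m ?h w) u = 0" if "u \<in> harmonic p q l" for u
  proof -
    have "herm (p + q) l (\<lambda>w. rho_tensor a m t w - rho_tensor a m ?h w) u
        = herm (p + q) l (\<lambda>w. t w - ?h w) (rho_tensor a m u)"
      using assms by (simp add: tensor_linear_diff[OF tensor_linear_rho_tensor, symmetric] herm_rho_tensor)
    then show ?thesis
      using orth harmonic_rho_tensor[OF assms that] by simp
  qed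
  with harmonic_rho_tensor[OF assms h] show "is_harm_proj p q l (rho_tensor a m t) (rho_tensor a m ?h)"
    by (simp add: is_harm_proj_def)
qed

section \<open>Operators on forms\<close>

lemma pair_less_neq_swap: "b \<noteq> c \<Longrightarrow> pair_less b c \<noteq> pair_less c b"
  unfolding pair_less_def by (cases b; cases c) auto

lemma sign_card_remove:
  assumes "finite S" and "b \<in> S" and "pair_less b c"
  shows "(-1::complex) ^ card {d \<in> S - {b}. pair_less d c} = - ((-1) ^ card {d \<in> S. pair_less d c})"
proof -
  have "card {d \<in> S. pair_less d c} = Suc (card ({d \<in> S. pair_less d c} - {b}))"
    using assms by (intro card_Suc_Diff1[symmetric]) auto
  moreover have "{d \<in> S - {b}. pair_less d c} = {d \<in> S. pair_less d c} - {b}" by auto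
  ultimately show ?thesis by simp
qed

lemma extA_anticommute:
  assumes "\<And>x S w. infinite S \<Longrightarrow> \<Phi> x S w = 0"
  shows "extA b (extA c \<Phi>) x S w = - extA c (extA b \<Phi>) x S w"
proof (cases "b \<in> S \<and> c \<in> S \<and> b \<noteq> c")
  case True
  then have bS: "b \<in> S" and cS: "c \<in> S" and bc: "b \<noteq> c" "c \<noteq> b" by auto
  have swap: "S - {c} - {b} = S - {b} - {c}" by auto
  show ?thesis
  proof (cases "finite S")
    case False
    then show ?thesis using assms[of "S - {b} - {c}"] True unfolding extA_def swap by simp
  next
    case fin: True
    have keep: "{d \<in> S - {e}. pair_less d e'} = {d \<in> S. pair_less d e'}" if "\<not> pair_less e e'" for e e'
      using that by auto
    from pair_less_neq_swap[OF bc(1)] consider "pair_less b c" "\<not> pair_less c b"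
      | "pair_less c b" "\<not> pair_less b c" by auto
    then show ?thesis
      by cases (use fin sign_card_remove keep in \<open>simp_all add: extA_def swap bS cS bc\<close>)
  qed
qed (auto simp: extA_def)

lemma extA_lincomb:
  "extA b (\<lambda>x S w. \<Sum>k\<in>K. c k * \<Phi> k x S w) = (\<lambda>x S w. \<Sum>k\<in>K. c k * extA b (\<Phi> k) x S w)"
  unfolding extA_def by (auto simp: fun_eq_iff sum_distrib_left algebra_simps)

lemma tensA_lincomb:
  "tensA a (\<lambda>x S w. \<Sum>k\<in>K. c k * \<Phi> k x S w) = (\<lambda>x S w. \<Sum>k\<in>K. c k * tensA a (\<Phi> k) x S w)"
  unfolding tensA_def by (auto simp: fun_eq_iff split: list.split)

lemma rhoX_lincomb:
  "rhoX a b (\<lambda>x S w. \<Sum>k\<in>K. c k * \<Phi> k x S w) = (\<lambda>x S w. \<Sum>k\<in>K. c k * rhoX a b (\<Phi> k) x S w)"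
  by (simp add: fun_eq_iff rhoX_eq_rho_tensor tensor_linear_lincomb[OF tensor_linear_rho_tensor])

lemma extA_tensA: "extA b (tensA a \<Phi>) = tensA a (extA b \<Phi>)"
  unfolding extA_def tensA_def by (auto simp: fun_eq_iff split: list.split)

lemma extA_sum: "extA b (\<lambda>x S w. \<Sum>k\<in>K. \<Phi> k x S w) = (\<lambda>x S w. \<Sum>k\<in>K. extA b (\<Phi> k) x S w)"
  using extA_lincomb[of b "\<lambda>_. 1"] by simp

lemma tensA_sum: "tensA a (\<lambda>x S w. \<Sum>k\<in>K. \<Phi> k x S w) = (\<lambda>x S w. \<Sum>k\<in>K. tensA a (\<Phi> k) x S w)"
  using tensA_lincomb[of a "\<lambda>_. 1"] by simp

lemma extA_add: "extA b (\<lambda>x S w. \<Phi> x S w + \<Psi> x S w) = (\<lambda>x S w. extA b \<Phi> x S w + extA b \<Psi> x S w)"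
  by (simp add: fun_eq_iff extA_def algebra_simps)

lemma extA_scale: "extA b (\<lambda>x S w. c * \<Phi> x S w) = (\<lambda>x S w. c * extA b \<Phi> x S w)"
  by (simp add: fun_eq_iff extA_def algebra_simps)

lemma Hop_zero: "Hop a i (\<lambda>x S w. 0) = (\<lambda>x S w. 0)"
  by (simp add: fun_eq_iff Hop_eq_creation creation_zero)

lemma Hop_tensA: "Hop a i (tensA c \<Phi>) = tensA c (Hop a i \<Phi>)"
  by (auto simp: fun_eq_iff Hop_eq_creation tensA_def creation_zero split: list.split)

lemma rhoX_tensA:
  assumes "a \<noteq> m" and "b \<noteq> m"
  shows "rhoX a m (tensA b \<Phi>) x S w = (if b = a then tensA m \<Phi> x S w else 0) + tensA b (rhoX a m \<Phi>) x S w"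
proof (cases w)
  case Nil
  then show ?thesis by (simp add: rhoX_def tensA_def)
next
  case (Cons c w')
  have "rhoX a m (tensA b \<Phi>) x S w =
     (if c = m then tensA b \<Phi> x S (a # w') else if c = a then tensA b \<Phi> x S (m # w') else 0) +
     (\<Sum>j<length w'. if w' ! j = m then tensA b \<Phi> x S (c # w'[j := a])
        else if w' ! j = a then tensA b \<Phi> x S (c # w'[j := m]) else 0)"
    unfolding rhoX_def Cons length_Cons sum.lessThan_Suc_shift by (simp cong: if_cong)
  also have "\<dots> = (if b = a then tensA m \<Phi> x S w else 0) + tensA b (rhoX a m \<Phi>) x S w"
    unfolding Cons tensA_def rhoX_def using assms
    by (cases "c = b") (auto intro!: sum.neutral cong: if_cong)
  finally show ?thesis .
qed

locale signature_forms =
  fixes p q n :: nat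
begin

abbreviation positive_poly :: "(coords \<Rightarrow> complex) \<Rightarrow> bool" where
  "positive_poly \<equiv> gauss_poly (p + q) n {c. fst c < p}"

text \<open>The finiteness condition is needed because the sign in \<^const>\<open>extA\<close> counts a set with
  \<^const>\<open>card\<close>, which is 0 on infinite sets.\<close>
definition admissible :: "form \<Rightarrow> bool" where
  "admissible \<Phi> \<longleftrightarrow> (\<forall>S w. positive_poly (\<lambda>x. \<Phi> x S w)) \<and> (\<forall>x S w. infinite S \<longrightarrow> \<Phi> x S w = 0)"

lemma admissible_poly: "admissible \<Phi> \<Longrightarrow> positive_poly (\<lambda>x. \<Phi> x S w)"
  by (simp add: admissible_def)

lemma admissible_infinite: "admissible \<Phi> \<Longrightarrow> infinite S \<Longrightarrow> \<Phi> x S w = 0"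
  by (simp add: admissible_def)

lemma admissible_Hop:
  assumes "a < p" and "admissible \<Phi>"
  shows "admissible (Hop a i \<Phi>)"
proof -
  have "positive_poly (\<lambda>x. Hop a i \<Phi> x S w)" for S w
    using gauss_poly_creation[OF admissible_poly[OF assms(2)], of a i] assms(1)
    by (simp add: Hop_fun_eq_creation insert_absorb)
  moreover have "Hop a i \<Phi> x S w = 0" if "infinite S" for x S w
    using admissible_infinite[OF assms(2) that] by (simp add: Hop_eq_creation creation_zero)
  ultimately show ?thesis by (simp add: admissible_def)
qed

lemma admissible_extA: "admissible \<Phi> \<Longrightarrow> admissible (extA b \<Phi>)"
  by (auto simp: admissible_def extA_def intro!: gauss_poly_if gauss_poly_scale gauss_poly_zero)

lemma admissible_tensA:
  assumes "admissible \<Phi>"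
  shows "admissible (tensA a \<Phi>)"
proof -
  have "positive_poly (\<lambda>x. tensA a \<Phi> x S w)" for S w
    using admissible_poly[OF assms]
    by (cases w) (auto simp: tensA_def intro!: gauss_poly_if gauss_poly_zero)
  moreover have "tensA a \<Phi> x S w = 0" if "infinite S" for x S w
    using admissible_infinite[OF assms that] by (cases w) (auto simp: tensA_def)
  ultimately show ?thesis by (simp add: admissible_def)
qed

lemma admissible_rhoX: "admissible \<Phi> \<Longrightarrow> admissible (rhoX a b \<Phi>)"
  unfolding admissible_def rhoX_def
  by (auto intro!: gauss_poly_sum gauss_poly_if gauss_poly_zero sum.neutral)

lemma admissible_lincomb:
  "\<forall>k\<in>K. admissible (\<Phi> k) \<Longrightarrow> admissible (\<lambda>x S w. \<Sum>k\<in>K. c k * \<Phi> k x S w)"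
  unfolding admissible_def by (auto intro!: gauss_poly_sum gauss_poly_scale sum.neutral)

lemma Dop_eq_lincomb: "Dop p j \<Phi> = (\<lambda>x S w. \<Sum>a<p. (1/2) * tensA a (Hop a j \<Phi>) x S w)"
  unfolding Dop_def by (simp add: sum_distrib_left)

lemma phi0_factor_eq_lincomb: "phi0_factor p i m \<Phi> = (\<lambda>x S w. \<Sum>a<p. 1 * extA (a, m) (Hop a i \<Phi>) x S w)"
  unfolding phi0_factor_def by simp

lemma admissible_Dop: "admissible \<Phi> \<Longrightarrow> admissible (Dop p j \<Phi>)"
  unfolding Dop_eq_lincomb by (intro admissible_lincomb ballI admissible_tensA admissible_Hop) auto

lemma admissible_phi0_factor: "admissible \<Phi> \<Longrightarrow> admissible (phi0_factor p i m \<Phi>)"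
  unfolding phi0_factor_eq_lincomb by (intro admissible_lincomb ballI admissible_extA admissible_Hop) auto

lemma Hop_commute: "admissible \<Phi> \<Longrightarrow> Hop a i (Hop b j \<Phi>) = Hop b j (Hop a i \<Phi>)"
  using creation_commute[OF admissible_poly] by (simp add: fun_eq_iff Hop_eq_creation Hop_fun_eq_creation)

lemma Hop_lincomb:
  assumes "\<forall>k\<in>K. admissible (\<Phi> k)"
  shows "Hop a i (\<lambda>x S w. \<Sum>k\<in>K. c k * \<Phi> k x S w) = (\<lambda>x S w. \<Sum>k\<in>K. c k * Hop a i (\<Phi> k) x S w)"
proof (intro ext)
  fix x S w
  have poly: "positive_poly (\<lambda>y. \<Phi> k y S w)" if "k \<in> K" for k
    using assms that by (simp add: admissible_poly)
  show "Hop a i (\<lambda>x S w. \<Sum>k\<in>K. c k * \<Phi> k x S w) x S w = (\<Sum>k\<in>K. c k * Hop a i (\<Phi> k) x S w)"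
    by (simp add: Hop_eq_creation creation_lincomb[OF poly])
qed

lemma Hop_extA: "admissible \<Phi> \<Longrightarrow> Hop a i (extA b \<Phi>) = extA b (Hop a i \<Phi>)"
  using creation_scale[OF admissible_poly]
  by (auto simp: fun_eq_iff Hop_eq_creation extA_def creation_if creation_zero)

lemma Hop_rhoX:
  assumes "admissible \<Phi>"
  shows "Hop a i (rhoX b c \<Phi>) = rhoX b c (Hop a i \<Phi>)"
proof (intro ext)
  fix x S w
  have "Hop a i (rhoX b c \<Phi>) x S w = creation a i (\<lambda>y. \<Sum>j<length w. 1 * (if w ! j = c then \<Phi> y S (w[j := b])
      else if w ! j = b then \<Phi> y S (w[j := c]) else 0)) x"
    by (simp add: Hop_eq_creation rhoX_def)
  also have "\<dots> = rhoX b c (Hop a i \<Phi>) x S w"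
    using admissible_poly[OF assms]
    by (subst creation_lincomb) (auto simp: rhoX_def Hop_eq_creation creation_if creation_zero
        cong: if_cong intro!: gauss_poly_if gauss_poly_zero)
  finally show "Hop a i (rhoX b c \<Phi>) x S w = rhoX b c (Hop a i \<Phi>) x S w" .
qed

lemma Hop_sum:
  "\<forall>k\<in>K. admissible (\<Phi> k) \<Longrightarrow>
    Hop a i (\<lambda>x S w. \<Sum>k\<in>K. \<Phi> k x S w) = (\<lambda>x S w. \<Sum>k\<in>K. Hop a i (\<Phi> k) x S w)"
  using Hop_lincomb[of K \<Phi> a i "\<lambda>_. 1"] by simp

lemma phi0_factor_phi0_factor:
  assumes "admissible \<Phi>"
  shows "phi0_factor p i \<mu> (phi0_factor p j \<nu> \<Phi>) x S w =
    (\<Sum>a<p. \<Sum>b<p. extA (a, \<mu>) (extA (b, \<nu>) (Hop a i (Hop b j \<Phi>))) x S w)"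
proof -
  have "phi0_factor p i \<mu> (phi0_factor p j \<nu> \<Phi>) x S w =
      (\<Sum>a<p. extA (a, \<mu>) (\<lambda>x S w. \<Sum>b<p. Hop a i (extA (b, \<nu>) (Hop b j \<Phi>)) x S w) x S w)"
    unfolding phi0_factor_def using assms
    by (intro sum.cong refl arg_cong[where f = "\<lambda>F. extA _ F x S w"] Hop_sum)
      (auto intro: admissible_extA admissible_Hop)
  also have "\<dots> = (\<Sum>a<p. \<Sum>b<p. extA (a, \<mu>) (extA (b, \<nu>) (Hop a i (Hop b j \<Phi>))) x S w)"
    using assms by (intro sum.cong refl) (simp add: extA_sum Hop_extA admissible_Hop)
  finally show ?thesis .
qed

lemma phi0_factor_anticommute:
  assumes "admissible \<Phi>"
  shows "phi0_factor p i \<mu> (phi0_factor p j \<nu> \<Phi>) x S w = - phi0_factor p j \<nu> (phi0_factor p i \<mu> \<Phi>) x S w"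
proof -
  have "extA (a, \<mu>) (extA (b, \<nu>) (Hop a i (Hop b j \<Phi>))) x S w
      = - extA (b, \<nu>) (extA (a, \<mu>) (Hop b j (Hop a i \<Phi>))) x S w" if "a < p" "b < p" for a b
    using that assms Hop_commute[OF assms, of a i b j]
    by (metis admissible_Hop admissible_infinite extA_anticommute)
  then show ?thesis
    unfolding phi0_factor_phi0_factor[OF assms] sum_negf[symmetric]
    by (subst sum.swap) (auto intro!: sum.cong)
qed

lemma phi0_factor_square: "admissible \<Phi> \<Longrightarrow> phi0_factor p i \<mu> (phi0_factor p i \<mu> \<Phi>) x S w = 0"
  using phi0_factor_anticommute[of \<Phi> i \<mu> i \<mu> x S w] by simp

lemma phi0_factor_lincomb:
  assumes "\<forall>k\<in>K. admissible (\<Phi> k)"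
  shows "phi0_factor p i \<mu> (\<lambda>x S w. \<Sum>k\<in>K. c k * \<Phi> k x S w)
    = (\<lambda>x S w. \<Sum>k\<in>K. c k * phi0_factor p i \<mu> (\<Phi> k) x S w)"
proof (intro ext)
  fix x S w
  have "phi0_factor p i \<mu> (\<lambda>x S w. \<Sum>k\<in>K. c k * \<Phi> k x S w) x S w
      = (\<Sum>a<p. \<Sum>k\<in>K. c k * extA (a, \<mu>) (Hop a i (\<Phi> k)) x S w)"
    unfolding phi0_factor_def using assms by (simp add: Hop_lincomb extA_lincomb)
  also have "\<dots> = (\<Sum>k\<in>K. c k * phi0_factor p i \<mu> (\<Phi> k) x S w)"
    unfolding phi0_factor_def by (subst sum.swap) (simp add: sum_distrib_left)
  finally show "phi0_factor p i \<mu> (\<lambda>x S w. \<Sum>k\<in>K. c k * \<Phi> k x S w) x S w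
      = (\<Sum>k\<in>K. c k * phi0_factor p i \<mu> (\<Phi> k) x S w)" .
qed

lemma phi0_factor_Dop:
  assumes "admissible \<Phi>"
  shows "phi0_factor p i \<mu> (Dop p j \<Phi>) = Dop p j (phi0_factor p i \<mu> \<Phi>)"
proof (intro ext)
  fix x S w
  have "phi0_factor p i \<mu> (Dop p j \<Phi>) x S w
      = (\<Sum>a<p. \<Sum>b<p. (1/2) * tensA b (extA (a, \<mu>) (Hop a i (Hop b j \<Phi>))) x S w)"
    unfolding phi0_factor_def Dop_eq_lincomb using assms
    by (simp add: Hop_lincomb admissible_tensA admissible_Hop Hop_tensA extA_lincomb extA_tensA
        del: times_divide_eq_left)
  also have "\<dots> = (\<Sum>b<p. \<Sum>a<p. (1/2) * tensA b (extA (a, \<mu>) (Hop b j (Hop a i \<Phi>))) x S w)"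
    by (subst sum.swap) (simp add: Hop_commute[OF assms])
  also have "\<dots> = Dop p j (phi0_factor p i \<mu> \<Phi>) x S w"
    unfolding phi0_factor_def Dop_eq_lincomb using assms
    by (simp add: Hop_sum admissible_extA admissible_Hop Hop_extA tensA_sum sum_distrib_left
        del: times_divide_eq_left)
  finally show "phi0_factor p i \<mu> (Dop p j \<Phi>) x S w = Dop p j (phi0_factor p i \<mu> \<Phi>) x S w" .
qed

definition dV_part :: "nat \<Rightarrow> form \<Rightarrow> form" where
  "dV_part \<mu> \<Phi> = (\<lambda>x S w. \<Sum>a<p. extA (a, \<mu>) (rhoX a \<mu> \<Phi>) x S w)"

lemma dV_part_lincomb:
  "dV_part \<mu> (\<lambda>x S w. \<Sum>k\<in>K. c k * \<Phi> k x S w) = (\<lambda>x S w. \<Sum>k\<in>K. c k * dV_part \<mu> (\<Phi> k) x S w)"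
  unfolding dV_part_def rhoX_lincomb extA_lincomb by (subst sum.swap) (simp add: sum_distrib_left)

lemma extA_Dop: "admissible \<Phi> \<Longrightarrow> extA b (Dop p j \<Phi>) = Dop p j (extA b \<Phi>)"
  unfolding Dop_eq_lincomb extA_lincomb by (simp add: extA_tensA Hop_extA)

lemma Dop_sum:
  assumes "\<forall>k\<in>K. admissible (\<Phi> k)"
  shows "Dop p j (\<lambda>x S w. \<Sum>k\<in>K. \<Phi> k x S w) = (\<lambda>x S w. \<Sum>k\<in>K. Dop p j (\<Phi> k) x S w)"
  unfolding Dop_eq_lincomb fun_eq_iff using assms
  by (simp add: Hop_sum tensA_sum sum_distrib_left sum.swap[of _ "{..<p}"] del: times_divide_eq_left)

lemma rhoX_Dop:
  assumes "admissible \<Phi>" and "a < p" and "p \<le> \<mu>"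
  shows "rhoX a \<mu> (Dop p j \<Phi>) = (\<lambda>x S w. (1/2) * tensA \<mu> (Hop a j \<Phi>) x S w + Dop p j (rhoX a \<mu> \<Phi>) x S w)"
proof (intro ext)
  fix x S w
  have "rhoX a \<mu> (Dop p j \<Phi>) x S w = (\<Sum>b<p. (if b = a then (1/2) * tensA \<mu> (Hop b j \<Phi>) x S w else 0)
      + (1/2) * tensA b (Hop b j (rhoX a \<mu> \<Phi>)) x S w)"
    unfolding Dop_eq_lincomb rhoX_lincomb using assms
    by (intro sum.cong refl) (simp add: rhoX_tensA Hop_rhoX ring_distribs del: times_divide_eq_left)
  also have "\<dots> = (1/2) * tensA \<mu> (Hop a j \<Phi>) x S w + Dop p j (rhoX a \<mu> \<Phi>) x S w"
    using assms(2) by (simp add: Dop_eq_lincomb sum.distrib del: times_divide_eq_left)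
  finally show "rhoX a \<mu> (Dop p j \<Phi>) x S w = (1/2) * tensA \<mu> (Hop a j \<Phi>) x S w + Dop p j (rhoX a \<mu> \<Phi>) x S w" .
qed

lemma dV_part_Dop:
  assumes "admissible \<Phi>" and "p \<le> \<mu>"
  shows "dV_part \<mu> (Dop p j \<Phi>) x S w = (1/2) * tensA \<mu> (phi0_factor p j \<mu> \<Phi>) x S w + Dop p j (dV_part \<mu> \<Phi>) x S w"
proof -
  have "dV_part \<mu> (Dop p j \<Phi>) x S w = (\<Sum>a<p. (1/2) * tensA \<mu> (extA (a, \<mu>) (Hop a j \<Phi>)) x S w
      + Dop p j (extA (a, \<mu>) (rhoX a \<mu> \<Phi>)) x S w)"
    unfolding dV_part_def using assms
    by (intro sum.cong refl)
      (simp add: rhoX_Dop extA_add extA_scale extA_tensA extA_Dop admissible_rhoX del: times_divide_eq_left)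
  also have "\<dots> = (1/2) * tensA \<mu> (phi0_factor p j \<mu> \<Phi>) x S w + Dop p j (dV_part \<mu> \<Phi>) x S w"
    unfolding phi0_factor_def dV_part_def using assms
    by (simp add: sum.distrib tensA_sum Dop_sum admissible_extA admissible_rhoX sum_distrib_left
        del: times_divide_eq_left)
  finally show ?thesis .
qed

section \<open>A criterion for closedness\<close>

lemma weilX_eq_Hop:
  assumes "admissible \<Phi>" and "p \<le> \<mu>" and "\<mu> < p + q"
  shows "weilX n a \<mu> \<Phi> x S w = (\<Sum>i<n. complex_of_real (2 * pi * x (\<mu>, i)) * Hop a i \<Phi> x S w)"
proof -
  have "pderiv \<mu> i (\<lambda>y. \<Phi> y S w) x = complex_of_real (- 2 * pi * x (\<mu>, i)) * \<Phi> x S w" if "i < n" for i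
    using pderiv_outside[OF admissible_poly[OF assms(1)]] assms(2,3) that by simp
  then show ?thesis
    unfolding weilX_def Hop_def sum_negf[symmetric]
    by (intro sum.cong refl) (simp add: field_simps)
qed

lemma dS_eq_phi0_factors:
  assumes "admissible \<Phi>"
  shows "dS p q n \<Phi> x S w =
    (\<Sum>\<mu>\<in>{p..<p+q}. \<Sum>i<n. complex_of_real (2 * pi * x (\<mu>, i)) * phi0_factor p i \<mu> \<Phi> x S w)"
proof -
  have "dS p q n \<Phi> x S w = (\<Sum>a<p. \<Sum>\<mu>\<in>{p..<p+q}. \<Sum>i<n.
      complex_of_real (2 * pi * x (\<mu>, i)) * extA (a, \<mu>) (Hop a i \<Phi>) x S w)"
    unfolding dS_def using assms
    by (intro sum.cong refl) (simp add: extA_def weilX_eq_Hop sum_distrib_left algebra_simps)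
  also have "\<dots> = (\<Sum>\<mu>\<in>{p..<p+q}. \<Sum>a<p. \<Sum>i<n.
      complex_of_real (2 * pi * x (\<mu>, i)) * extA (a, \<mu>) (Hop a i \<Phi>) x S w)"
    by (rule sum.swap)
  also have "\<dots> = (\<Sum>\<mu>\<in>{p..<p+q}. \<Sum>i<n. \<Sum>a<p.
      complex_of_real (2 * pi * x (\<mu>, i)) * extA (a, \<mu>) (Hop a i \<Phi>) x S w)"
    by (intro sum.cong refl sum.swap)
  finally show ?thesis
    unfolding phi0_factor_def by (simp add: sum_distrib_left)
qed

definition annihilated :: "form \<Rightarrow> bool" where
  "annihilated \<Phi> \<longleftrightarrow> admissible \<Phi>
    \<and> (\<forall>i<n. \<forall>\<mu>\<in>{p..<p+q}. phi0_factor p i \<mu> \<Phi> = (\<lambda>x S w. 0))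
    \<and> (\<forall>\<mu>\<in>{p..<p+q}. dV_part \<mu> \<Phi> = (\<lambda>x S w. 0))"

lemma dD_annihilated:
  assumes "annihilated \<Phi>"
  shows "dD p q n \<Phi> x S w = 0"
proof -
  have "dS p q n \<Phi> x S w = 0"
    using assms by (simp add: annihilated_def dS_eq_phi0_factors)
  moreover have "dV p q \<Phi> x S w = (\<Sum>\<mu>\<in>{p..<p+q}. dV_part \<mu> \<Phi> x S w)"
    unfolding dV_def dV_part_def by (rule sum.swap)
  ultimately show ?thesis
    using assms by (simp add: annihilated_def dD_def)
qed

lemma annihilated_Dop:
  assumes "annihilated \<Phi>" and "j < n"
  shows "annihilated (Dop p j \<Phi>)"
proof -
  have adm: "admissible \<Phi>"
    and factors: "\<And>i \<mu>. i < n \<Longrightarrow> \<mu> \<in> {p..<p+q} \<Longrightarrow> phi0_factor p i \<mu> \<Phi> = (\<lambda>x S w. 0)"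
    and parts: "\<And>\<mu>. \<mu> \<in> {p..<p+q} \<Longrightarrow> dV_part \<mu> \<Phi> = (\<lambda>x S w. 0)"
    using assms(1) by (auto simp: annihilated_def)
  have Dop_zero: "Dop p j (\<lambda>x S w. 0) = (\<lambda>x S w. 0)"
    by (simp add: fun_eq_iff Dop_def tensA_def Hop_zero split: list.split)
  have tensA_zero: "tensA \<mu> (\<lambda>x S w. 0) = (\<lambda>x S w. 0)" for \<mu>
    by (simp add: fun_eq_iff tensA_def split: list.split)
  have "phi0_factor p i \<mu> (Dop p j \<Phi>) = (\<lambda>x S w. 0)" if "i < n" "\<mu> \<in> {p..<p+q}" for i \<mu>
    using that by (simp add: phi0_factor_Dop[OF adm] factors Dop_zero)
  moreover have "dV_part \<mu> (Dop p j \<Phi>) = (\<lambda>x S w. 0)" if "\<mu> \<in> {p..<p+q}" for \<mu>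
    using that assms(2) by (simp add: fun_eq_iff dV_part_Dop[OF adm] factors parts Dop_zero tensA_zero)
  ultimately show ?thesis
    using adm by (simp add: annihilated_def admissible_Dop)
qed

lemma annihilated_lincomb:
  assumes "\<forall>k\<in>K. annihilated (\<Phi> k)"
  shows "annihilated (\<lambda>x S w. \<Sum>k\<in>K. c k * \<Phi> k x S w)"
proof -
  have adm: "\<forall>k\<in>K. admissible (\<Phi> k)"
    using assms by (simp add: annihilated_def)
  have "phi0_factor p i \<mu> (\<lambda>x S w. \<Sum>k\<in>K. c k * \<Phi> k x S w) = (\<lambda>x S w. 0)"
    if "i < n" "\<mu> \<in> {p..<p+q}" for i \<mu>
    using assms that by (simp add: phi0_factor_lincomb[OF adm] annihilated_def)
  moreover have "dV_part \<mu> (\<lambda>x S w. \<Sum>k\<in>K. c k * \<Phi> k x S w) = (\<lambda>x S w. 0)"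
    if "\<mu> \<in> {p..<p+q}" for \<mu>
    using assms that by (simp add: dV_part_lincomb annihilated_def)
  ultimately show ?thesis
    using adm by (simp add: annihilated_def admissible_lincomb)
qed

lemma annihilated_scale: "annihilated \<Phi> \<Longrightarrow> annihilated (\<lambda>x S w. c * \<Phi> x S w)"
  using annihilated_lincomb[of "{()}" "\<lambda>_. \<Phi>" "\<lambda>_. c"] by simp

section \<open>The forms \<open>\<phi>\<^sub>n\<^sub>q\<^sub>,\<^sub>\<ell>\<close>\<close>

definition has_degree :: "nat \<Rightarrow> form \<Rightarrow> bool" where
  "has_degree l \<Phi> \<longleftrightarrow> (\<forall>x S. \<Phi> x S \<in> tensors (p + q) l)"

lemma has_degreeD: "has_degree l \<Phi> \<Longrightarrow> w \<notin> idx (p + q) l \<Longrightarrow> \<Phi> x S w = 0"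
  by (auto simp: has_degree_def tensors_def)

lemma has_degreeI: "(\<And>x S w. w \<notin> idx (p + q) l \<Longrightarrow> \<Phi> x S w = 0) \<Longrightarrow> has_degree l \<Phi>"
  by (auto simp: has_degree_def tensors_def)

lemma has_degree_Hop: "has_degree l \<Phi> \<Longrightarrow> has_degree l (Hop a i \<Phi>)"
proof (intro has_degreeI)
  fix x S w
  assume "has_degree l \<Phi>" and "w \<notin> idx (p + q) l"
  then have "(\<lambda>y. \<Phi> y S w) = (\<lambda>y. 0)" by (auto dest: has_degreeD)
  then show "Hop a i \<Phi> x S w = 0" by (simp add: Hop_eq_creation creation_zero)
qed

lemma has_degree_lincomb:
  assumes "\<forall>k\<in>K. has_degree l (\<Phi> k)"
  shows "has_degree l (\<lambda>x S w. \<Sum>k\<in>K. c k * \<Phi> k x S w)"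
  by (intro has_degreeI sum.neutral ballI) (simp add: has_degreeD[OF bspec[OF assms]])

lemma has_degree_phi0_factor:
  assumes "has_degree l \<Phi>"
  shows "has_degree l (phi0_factor p i \<mu> \<Phi>)"
proof (intro has_degreeI)
  fix x S w
  assume "w \<notin> idx (p + q) l"
  then show "phi0_factor p i \<mu> \<Phi> x S w = 0"
    by (simp add: phi0_factor_def extA_def has_degreeD[OF has_degree_Hop[OF assms]] cong: if_cong)
qed

lemma has_degree_Dop:
  assumes "has_degree l \<Phi>"
  shows "has_degree (Suc l) (Dop p j \<Phi>)"
proof (intro has_degreeI)
  fix x S w
  assume w: "w \<notin> idx (p + q) (Suc l)"
  have "tensA a (Hop a j \<Phi>) x S w = 0" if "a < p" for a
  proof (cases w)
    case (Cons c w')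
    with w that have "c = a \<Longrightarrow> w' \<notin> idx (p + q) l" by (auto simp: idx_def)
    with Cons show ?thesis
      by (auto simp: tensA_def intro: has_degreeD[OF has_degree_Hop[OF assms]])
  qed (simp add: tensA_def)
  then show "Dop p j \<Phi> x S w = 0" by (simp add: Dop_def)
qed

lemma has_degree_lift0: "has_degree 0 (lift0 \<phi>)"
  by (auto simp: has_degree_def tensors_def lift0_def idx_def)

lemma rhoX_degree_0:
  assumes "has_degree 0 \<Phi>"
  shows "rhoX a \<mu> \<Phi> = (\<lambda>x S w. 0)"
proof -
  have "\<Phi> x S (w[j := b]) = 0" if "j < length w" for x S w j b
    using that by (intro has_degreeD[OF assms]) (auto simp: idx_def)
  then show ?thesis
    unfolding fun_eq_iff rhoX_def by (auto intro!: sum.neutral)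
qed

lemma phi0_factor_zero: "phi0_factor p i \<mu> (\<lambda>x S w. 0) = (\<lambda>x S w. 0)"
  by (simp add: fun_eq_iff phi0_factor_def extA_def Hop_zero cong: if_cong)

abbreviation phi0_product :: "(nat \<times> nat) list \<Rightarrow> form \<Rightarrow> form" where
  "phi0_product L \<equiv> foldr (\<lambda>(i, m) \<Psi>. phi0_factor p i m \<Psi>) L"

lemma admissible_phi0_product: "admissible \<Phi> \<Longrightarrow> admissible (phi0_product L \<Phi>)"
  by (induction L) (auto simp: admissible_phi0_factor)

lemma has_degree_phi0_product: "has_degree l \<Phi> \<Longrightarrow> has_degree l (phi0_product L \<Phi>)"
  by (induction L) (auto simp: has_degree_phi0_factor)

lemma phi0_factor_phi0_product:
  assumes "admissible \<Phi>" and "(i, \<mu>) \<in> set L"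
  shows "phi0_factor p i \<mu> (phi0_product L \<Phi>) = (\<lambda>x S w. 0)"
  using assms(2)
proof (induction L)
  case (Cons c L)
  obtain j \<nu> where c: "c = (j, \<nu>)" by (cases c)
  have adm: "admissible (phi0_product L \<Phi>)" by (rule admissible_phi0_product[OF assms(1)])
  show ?case
  proof (cases "(i, \<mu>) = (j, \<nu>)")
    case True
    then show ?thesis using phi0_factor_square[OF adm] c by auto
  next
    case False
    then have "(i, \<mu>) \<in> set L" using Cons.prems c by auto
    then have IH: "phi0_factor p i \<mu> (phi0_product L \<Phi>) = (\<lambda>x S w. 0)" by (rule Cons.IH)
    show ?thesis
      unfolding fun_eq_iff using phi0_factor_anticommute[OF adm, of i \<mu> j \<nu>] c
      by (simp add: IH phi0_factor_zero)
  qed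
qed simp

lemma annihilated_phi_nq_0: "annihilated (lift0 (phi_nq_0 p q n))"
proof -
  define G :: form where "G = (\<lambda>y S w. if S = {} \<and> w = [] then gauss (p + q) n y else 0)"
  define F where "F = phi0_product [(i, m). i \<leftarrow> [0..<n], m \<leftarrow> [p..<p+q]] G"
  have "admissible G"
    by (auto simp: admissible_def G_def intro!: gauss_poly_if gauss_poly_gauss gauss_poly_zero)
  then have adm: "admissible F"
    unfolding F_def by (rule admissible_phi0_product)
  have "has_degree 0 G"
    by (auto simp: G_def idx_def intro!: has_degreeI)
  then have deg: "has_degree 0 F"
    unfolding F_def by (rule has_degree_phi0_product)
  have "phi0_factor p i \<mu> F = (\<lambda>x S w. 0)" if "i < n" "\<mu> \<in> {p..<p+q}" for i \<mu>
    unfolding F_def using that by (intro phi0_factor_phi0_product \<open>admissible G\<close>) (auto simp: image_iff)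
  moreover have "dV_part \<mu> F = (\<lambda>x S w. 0)" for \<mu>
    by (simp add: fun_eq_iff dV_part_def rhoX_degree_0[OF deg] extA_def cong: if_cong)
  ultimately have "annihilated F"
    using adm by (simp add: annihilated_def)
  moreover have "lift0 (phi_nq_0 p q n) = (\<lambda>x S w. complex_of_real (2 powr (- real (n * q) / 2)) * F x S w)"
  proof -
    have "phi_nq_0 p q n x S = complex_of_real (2 powr (- real (n * q) / 2)) * F x S []" for x S
      unfolding phi_nq_0_def F_def G_def by (rule refl)
    moreover have "F x S w = 0" if "w \<noteq> []" for x S w
      using that by (intro has_degreeD[OF deg]) (simp add: idx_def)
    ultimately show ?thesis by (auto simp: fun_eq_iff lift0_def)
  qed
  ultimately show ?thesis
    by (simp add: annihilated_scale)
qed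

lemma has_degree_phi_nq_basis: "has_degree (length is) (phi_nq_basis p q n is)"
  by (induction "is") (simp_all add: phi_nq_basis_def has_degree_lift0 has_degree_Dop)

lemma annihilated_phi_nq_basis: "set is \<subseteq> {..<n} \<Longrightarrow> annihilated (phi_nq_basis p q n is)"
  by (induction "is") (simp_all add: phi_nq_basis_def annihilated_phi_nq_0 annihilated_Dop)

lemma annihilated_phi_nq_l: "annihilated (phi_nq_l p q n l u)"
  unfolding phi_nq_l_def by (intro annihilated_lincomb ballI annihilated_phi_nq_basis) (simp add: idx_def)

lemma has_degree_phi_nq_l: "has_degree l (phi_nq_l p q n l u)"
proof -
  have "has_degree l (phi_nq_basis p q n is)" if "is \<in> idx n l" for "is"
    using has_degree_phi_nq_basis[of "is"] that by (simp add: idx_def)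
  then show ?thesis
    unfolding phi_nq_l_def by (intro has_degree_lincomb ballI)
qed


section \<open>Coefficientwise linear maps\<close>

definition rho_equivariant :: "nat \<Rightarrow> ((nat list \<Rightarrow> complex) \<Rightarrow> nat list \<Rightarrow> complex) \<Rightarrow> bool" where
  "rho_equivariant l L \<longleftrightarrow> (\<forall>t a \<mu>. t \<in> tensors (p + q) l \<longrightarrow> a < p \<longrightarrow> p \<le> \<mu> \<longrightarrow> \<mu> < p + q \<longrightarrow>
     L (rho_tensor a \<mu> t) = rho_tensor a \<mu> (L t))"

lemma tensor_linear_expand_coeffs:
  assumes "tensor_linear L" and "has_degree l \<Theta>"
  shows "L (\<Theta> x S) w = (\<Sum>v\<in>idx (p + q) l. L (unit_tensor v) w * \<Theta> x S v)"
  using tensor_linear_expand[OF assms(1), of "\<Theta> x S" "p + q" l w] assms(2)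
  by (simp add: has_degree_def mult.commute)

lemma admissible_coeffwise:
  assumes "tensor_linear L" and "has_degree l \<Theta>" and "admissible \<Theta>"
  shows "admissible (\<lambda>x S. L (\<Theta> x S))"
proof -
  have "positive_poly (\<lambda>x. L (\<Theta> x S) w)" for S w
    unfolding tensor_linear_expand_coeffs[OF assms(1,2)]
    by (intro gauss_poly_sum gauss_poly_scale admissible_poly[OF assms(3)])
  moreover have "L (\<Theta> x S) w = 0" if "infinite S" for x S w
  proof -
    have "\<Theta> x S = (\<lambda>w. 0)" using admissible_infinite[OF assms(3) that] by auto
    then show ?thesis by (simp add: tensor_linear_zero[OF assms(1)])
  qed
  ultimately show ?thesis by (simp add: admissible_def)
qed

lemma Hop_coeffwise:
  assumes "tensor_linear L" and "has_degree l \<Theta>" and "admissible \<Theta>"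
  shows "Hop a i (\<lambda>x S. L (\<Theta> x S)) = (\<lambda>x S. L (Hop a i \<Theta> x S))"
proof (intro ext)
  fix x S w
  have "Hop a i (\<lambda>x S. L (\<Theta> x S)) x S w
      = creation a i (\<lambda>y. \<Sum>v\<in>idx (p + q) l. L (unit_tensor v) w * \<Theta> y S v) x"
    by (simp add: Hop_eq_creation tensor_linear_expand_coeffs[OF assms(1,2)])
  also have "\<dots> = (\<Sum>v\<in>idx (p + q) l. L (unit_tensor v) w * Hop a i \<Theta> x S v)"
  proof -
    have poly: "v \<in> idx (p + q) l \<Longrightarrow> positive_poly (\<lambda>y. \<Theta> y S v)" for v
      by (rule admissible_poly[OF assms(3)])
    show ?thesis by (simp add: creation_lincomb[OF poly] Hop_eq_creation)
  qed
  also have "\<dots> = L (Hop a i \<Theta> x S) w"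
    by (simp add: tensor_linear_expand_coeffs[OF assms(1) has_degree_Hop[OF assms(2)]])
  finally show "Hop a i (\<lambda>x S. L (\<Theta> x S)) x S w = L (Hop a i \<Theta> x S) w" .
qed

lemma extA_coeffwise:
  assumes "tensor_linear L"
  shows "extA b (\<lambda>x S. L (\<Theta> x S)) = (\<lambda>x S. L (extA b \<Theta> x S))"
proof (intro ext)
  fix x S w
  show "extA b (\<lambda>x S. L (\<Theta> x S)) x S w = L (extA b \<Theta> x S) w"
  proof (cases "b \<in> S")
    case True
    then have "extA b \<Theta> x S = (\<lambda>w. (-1) ^ card {c \<in> S. pair_less c b} * \<Theta> x (S - {b}) w)"
      by (simp add: fun_eq_iff extA_def)
    then show ?thesis using True by (simp add: extA_def tensor_linear_scale[OF assms])
  next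
    case False
    then have "extA b \<Theta> x S = (\<lambda>w. 0)" by (simp add: fun_eq_iff extA_def)
    then show ?thesis using False by (simp add: extA_def tensor_linear_zero[OF assms])
  qed
qed

lemma sum_coeffwise:
  assumes "tensor_linear L"
  shows "(\<lambda>x S w. \<Sum>k\<in>K. L (\<Theta> k x S) w) = (\<lambda>x S. L (\<lambda>w. \<Sum>k\<in>K. \<Theta> k x S w))"
proof (intro ext)
  fix x S w
  show "(\<Sum>k\<in>K. L (\<Theta> k x S) w) = L (\<lambda>w. \<Sum>k\<in>K. \<Theta> k x S w) w"
    by (simp add: tensor_linear_sum[OF assms, where K=K and t="\<lambda>k. \<Theta> k x S"])
qed

lemma rhoX_coeffwise:
  assumes "rho_equivariant l L" and "has_degree l \<Theta>" and "a < p" and "p \<le> \<mu>" and "\<mu> < p + q"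
  shows "rhoX a \<mu> (\<lambda>x S. L (\<Theta> x S)) = (\<lambda>x S. L (rhoX a \<mu> \<Theta> x S))"
  using assms by (simp add: fun_eq_iff rho_equivariant_def has_degree_def rhoX_eq_rho_tensor)

lemma annihilated_coeffwise:
  assumes "tensor_linear L" and "rho_equivariant l L" and "has_degree l \<Theta>" and "annihilated \<Theta>"
  shows "annihilated (\<lambda>x S. L (\<Theta> x S))"
proof -
  have adm: "admissible \<Theta>" using assms(4) by (simp add: annihilated_def)
  have "phi0_factor p i \<mu> (\<lambda>x S. L (\<Theta> x S)) = (\<lambda>x S. L (phi0_factor p i \<mu> \<Theta> x S))" for i \<mu>
    unfolding phi0_factor_def
    by (simp add: Hop_coeffwise[OF assms(1,3) adm] extA_coeffwise[OF assms(1)] sum_coeffwise[OF assms(1)])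
  moreover have "dV_part \<mu> (\<lambda>x S. L (\<Theta> x S)) = (\<lambda>x S. L (dV_part \<mu> \<Theta> x S))"
    if "\<mu> \<in> {p..<p+q}" for \<mu>
    unfolding dV_part_def using that
    by (simp add: rhoX_coeffwise[OF assms(2,3)] extA_coeffwise[OF assms(1)] sum_coeffwise[OF assms(1)])
  ultimately show ?thesis
    using assms(4) admissible_coeffwise[OF assms(1,3) adm]
    by (simp add: annihilated_def tensor_linear_zero[OF assms(1)])
qed

lemma rho_equivariant_harm_young:
  "rho_equivariant (sum_list lam) (\<lambda>t. harm_proj p q (sum_list lam) (young_proj lam t))"
  unfolding rho_equivariant_def
proof (intro allI impI)
  fix t a \<mu>
  assume "t \<in> tensors (p + q) (sum_list lam)" "a < p" "p \<le> \<mu>" "\<mu> < p + q"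
  then show "harm_proj p q (sum_list lam) (young_proj lam (rho_tensor a \<mu> t))
      = rho_tensor a \<mu> (harm_proj p q (sum_list lam) (young_proj lam t))"
    by (simp only: young_proj_rho_tensor harm_proj_rho_tensor)
qed

lemma annihilated_phi_nq_lam: "annihilated (phi_nq_lam p q n lam u)"
  unfolding phi_nq_lam_def
  by (rule annihilated_coeffwise[OF tensor_linear_comp[OF tensor_linear_young_proj tensor_linear_harm_proj]
      rho_equivariant_harm_young has_degree_phi_nq_l annihilated_phi_nq_l])

end

theorem theorem5p7:
  fixes p q n :: nat
  assumes "1 \<le> n" and "n \<le> p"
  shows "(\<forall>l u. u \<in> tensors n l \<longrightarrow>
            (\<forall>x S w. dD p q n (phi_nq_l p q n l u) x S w = 0))
       \<and> (\<forall>lam u. is_partition lam \<and> length lam \<le> n \<and> u \<in> schur lam n \<longrightarrow>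
            (\<forall>x S w. dD p q n (phi_nq_lam p q n lam u) x S w = 0))"
  using signature_forms.dD_annihilated[OF signature_forms.annihilated_phi_nq_l]
    signature_forms.dD_annihilated[OF signature_forms.annihilated_phi_nq_lam] by blast

end
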